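(* For every fixed constant $k$, there is a polynomial-time algorithm that, given a binary-classification tree ensemble $\mathcal{E}$ all of whose trees have depth $1$ over a feature set $\mathcal{F}$, a set $F\subseteq\mathcal{F}$ with $|\mathcal{F}\setminus F|\le k$, and a gap parameter $g\ge 0$, decides whether $\mathcal{E}$ is $(g,F)$-sensitive.
   Context: Inputs live in $\mathcal{X} \subseteq \mathbb{R}^d$ indexed by a feature set $\mathcal{F}$; $x_f$ is the value of feature $f$ in input $x$. A decision tree is either a leaf $n$ with a real value $n.val$, or an internal node $n$ with a guard $X_f < \tau$ and two children $n.yes$, $n.no$; an input $x$ goes to $n.yes$ if $x_f<\tau$ and to $n.no$ otherwise, and $T(x)$ is the value of the leaf reached. A depth-1 tree (decision stump) has a single internal node (root) whose two children are leaves. A binary tree ensemble $\mathcal{E}$ is a finite set $\mathcal{T}$ of trees with raw output $\mathcal{E}^{raw}_1(x)=\sum_{T\in\mathcal{T}}T(x)$ and probability $\mathcal{E}^{prob}_1(x)=1/(1+e^{-\mathcal{E}^{raw}_1(x)})$. Given $F\subseteq\mathcal{F}$ and $g\ge 0$, $\mathcal{E}$ is $(g,F)$-sensitive if there exist inputs $x^{(1)},x^{(2)}$ with $x^{(1)}_f=x^{(2)}_f$ for all $f\in\mathcal{F}\setminus F$, $\mathcal{E}^{prob}_1(x^{(1)})\ge 0.5+g$ and $\mathcal{E}^{prob}_1(x^{(2)})\le 0.5-g$. Running time is polynomial in the size of the ensemble (number of trees and features), with $k$ treated as a constant. *)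

theory Defs
  imports Complex_Main
begin

text \<open>Features are natural numbers; the feature set is {..<d}. An input is a
function from features to reals (only features below d matter).\<close>

datatype tree = Leaf real | Node nat real tree tree

fun tree_eval :: "tree \<Rightarrow> (nat \<Rightarrow> real) \<Rightarrow> real" where
  "tree_eval (Leaf v) x = v"
| "tree_eval (Node f \<tau> t_yes t_no) x =
     (if x f < \<tau> then tree_eval t_yes x else tree_eval t_no x)"

fun depth :: "tree \<Rightarrow> nat" where
  "depth (Leaf v) = 0"
| "depth (Node f \<tau> l r) = Suc (max (depth l) (depth r))"

fun features :: "tree \<Rightarrow> nat set" where
  "features (Leaf v) = {}"
| "features (Node f \<tau> l r) = insert f (features l \<union> features r)"

type_synonym ensemble = "tree list"

definition raw :: "ensemble \<Rightarrow> (nat \<Rightarrow> real) \<Rightarrow> real" where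
  "raw E x = (\<Sum>T\<leftarrow>E. tree_eval T x)"

definition prob :: "ensemble \<Rightarrow> (nat \<Rightarrow> real) \<Rightarrow> real" where
  "prob E x = 1 / (1 + exp (- raw E x))"

definition sensitive :: "nat \<Rightarrow> ensemble \<Rightarrow> nat set \<Rightarrow> real \<Rightarrow> bool" where
  "sensitive d E F g \<longleftrightarrow>
     (\<exists>x1 x2 :: nat \<Rightarrow> real.
        (\<forall>f\<in>{..<d} - F. x1 f = x2 f) \<and>
        prob E x1 \<ge> 1/2 + g \<and> prob E x2 \<le> 1/2 - g)"

definition stump_ensemble :: "nat \<Rightarrow> ensemble \<Rightarrow> bool" where
  "stump_ensemble d E \<longleftrightarrow>
     (\<forall>T\<in>set E. depth T = 1 \<and> features T \<subseteq> {..<d})"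

text \<open>Each executed instruction costs one step.\<close>

datatype instr =
    IConst nat int
  | IAdd nat nat nat
  | ISub nat nat nat
  | ILoad nat nat
  | IStore nat nat
  | IJle nat nat nat
  | RConst nat int
  | RAdd nat nat nat
  | RSub nat nat nat
  | RMul nat nat nat
  | RDiv nat nat nat
  | RExp nat nat
  | RLoad nat nat
  | RStore nat nat
  | RJle nat nat nat
  | Halt

type_synonym program = "instr list"

record state =
  pc :: nat
  ireg :: "nat \<Rightarrow> int"
  rreg :: "nat \<Rightarrow> real"

definition halted :: "program \<Rightarrow> state \<Rightarrow> bool" where
  "halted P s \<longleftrightarrow> pc s \<ge> length P \<or> P ! pc s = Halt"

fun exec :: "instr \<Rightarrow> state \<Rightarrow> state" where
  "exec (IConst i c) s = s\<lparr>pc := Suc (pc s), ireg := (ireg s)(i := c)\<rparr>"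
| "exec (IAdd i j k) s = s\<lparr>pc := Suc (pc s), ireg := (ireg s)(i := ireg s j + ireg s k)\<rparr>"
| "exec (ISub i j k) s = s\<lparr>pc := Suc (pc s), ireg := (ireg s)(i := ireg s j - ireg s k)\<rparr>"
| "exec (ILoad i j) s = s\<lparr>pc := Suc (pc s), ireg := (ireg s)(i := ireg s (nat (ireg s j)))\<rparr>"
| "exec (IStore i j) s = s\<lparr>pc := Suc (pc s), ireg := (ireg s)(nat (ireg s j) := ireg s i)\<rparr>"
| "exec (IJle i j l) s = s\<lparr>pc := (if ireg s i \<le> ireg s j then l else Suc (pc s))\<rparr>"
| "exec (RConst i c) s = s\<lparr>pc := Suc (pc s), rreg := (rreg s)(i := of_int c)\<rparr>"
| "exec (RAdd i j k) s = s\<lparr>pc := Suc (pc s), rreg := (rreg s)(i := rreg s j + rreg s k)\<rparr>"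
| "exec (RSub i j k) s = s\<lparr>pc := Suc (pc s), rreg := (rreg s)(i := rreg s j - rreg s k)\<rparr>"
| "exec (RMul i j k) s = s\<lparr>pc := Suc (pc s), rreg := (rreg s)(i := rreg s j * rreg s k)\<rparr>"
| "exec (RDiv i j k) s = s\<lparr>pc := Suc (pc s), rreg := (rreg s)(i := rreg s j / rreg s k)\<rparr>"
| "exec (RExp i j) s = s\<lparr>pc := Suc (pc s), rreg := (rreg s)(i := exp (rreg s j))\<rparr>"
| "exec (RLoad i j) s = s\<lparr>pc := Suc (pc s), rreg := (rreg s)(i := rreg s (nat (ireg s j)))\<rparr>"
| "exec (RStore i j) s = s\<lparr>pc := Suc (pc s), rreg := (rreg s)(nat (ireg s j) := rreg s i)\<rparr>"
| "exec (RJle i j l) s = s\<lparr>pc := (if rreg s i \<le> rreg s j then l else Suc (pc s))\<rparr>"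
| "exec Halt s = s"

definition step :: "program \<Rightarrow> state \<Rightarrow> state" where
  "step P s = (if halted P s then s else exec (P ! pc s) s)"

definition run :: "program \<Rightarrow> nat \<Rightarrow> state \<Rightarrow> state" where
  "run P n s = (step P ^^ n) s"

definition decides_within :: "program \<Rightarrow> state \<Rightarrow> nat \<Rightarrow> bool \<Rightarrow> bool" where
  "decides_within P s0 t b \<longleftrightarrow>
     (\<exists>n\<le>t. halted P (run P n s0) \<and> ireg (run P n s0) 0 = (if b then 1 else 0))"

fun st_feat :: "tree \<Rightarrow> nat" where
  "st_feat (Node f \<tau> l r) = f" | "st_feat (Leaf v) = 0"
fun st_thr :: "tree \<Rightarrow> real" where
  "st_thr (Node f \<tau> l r) = \<tau>" | "st_thr (Leaf v) = 0"
fun leafval :: "tree \<Rightarrow> real" where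
  "leafval (Leaf v) = v" | "leafval (Node f \<tau> l r) = 0"
fun st_yes :: "tree \<Rightarrow> real" where
  "st_yes (Node f \<tau> l r) = leafval l" | "st_yes (Leaf v) = 0"
fun st_no :: "tree \<Rightarrow> real" where
  "st_no (Node f \<tau> l r) = leafval r" | "st_no (Leaf v) = 0"

text \<open>Integer registers: I[0] = d, I[1] = m (number of trees),
I[2+j] = feature of stump j, I[2+m+f] = [f \<in> F] for f < d.
Real registers: R[0] = g, R[1+3j], R[2+3j], R[3+3j] = threshold,
yes-leaf value, no-leaf value of stump j.\<close>
definition encode :: "nat \<Rightarrow> ensemble \<Rightarrow> nat set \<Rightarrow> real \<Rightarrow> state" where
  "encode d E F g =
   (let m = length E in
    \<lparr> pc = 0,
      ireg = (\<lambda>a. if a = 0 then int d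
                  else if a = 1 then int m
                  else if a < 2 + m then int (st_feat (E ! (a - 2)))
                  else if a < 2 + m + d then (if a - (2 + m) \<in> F then 1 else 0)
                  else 0),
      rreg = (\<lambda>a. if a = 0 then g
                  else if a < 1 + 3 * m then
                    (let j = (a - 1) div 3; r = (a - 1) mod 3 in
                     if r = 0 then st_thr (E ! j)
                     else if r = 1 then st_yes (E ! j) else st_no (E ! j))
                  else 0) \<rparr>)"

end

theory Submission
  imports Defs
begin

(* Along one feature a depth-1 ensemble only sees on which side of each of its m thresholds the
   value lies, so every input may be replaced by one whose coordinates are candidates: the
   thresholds and one point below all of them. The raw score is a sum of per-feature terms, hence
   two inputs that agree on the at most k fixed features (those outside F) can push the score up
   resp. down independently on every free feature. So E is (g,F)-sensitive iff for one of the
   (m + 1)^k choices of candidates for the fixed features, the maximal and the minimal raw score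
   pass the gap test. The program enumerates these choices with a mixed-radix counter, spending
   O((d + m)^3) steps per choice. *)

section \<open>Depth-one ensembles and candidate points\<close>

definition feat :: "ensemble \<Rightarrow> nat \<Rightarrow> nat" where
  "feat E j = st_feat (E ! j)"

definition thr :: "ensemble \<Rightarrow> nat \<Rightarrow> real" where
  "thr E j = st_thr (E ! j)"

definition yes_val :: "ensemble \<Rightarrow> nat \<Rightarrow> real" where
  "yes_val E j = st_yes (E ! j)"

definition no_val :: "ensemble \<Rightarrow> nat \<Rightarrow> real" where
  "no_val E j = st_no (E ! j)"

lemma stump_ensemble_nth:
  assumes "stump_ensemble d E" "j < length E"
  shows "E ! j = Node (feat E j) (thr E j) (Leaf (yes_val E j)) (Leaf (no_val E j))"
    and "feat E j < d"
proof -
  have T: "depth (E ! j) = 1" "features (E ! j) \<subseteq> {..<d}"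
    using assms unfolding stump_ensemble_def by auto
  obtain f \<tau> l r where n: "E ! j = Node f \<tau> l r" using T(1) by (cases "E ! j") auto
  have "depth l = 0" "depth r = 0" using T(1) n by auto
  then obtain a b where "l = Leaf a" "r = Leaf b" by (cases l; cases r) auto
  then show "E ! j = Node (feat E j) (thr E j) (Leaf (yes_val E j)) (Leaf (no_val E j))"
    and "feat E j < d"
    using n T(2) by (simp_all add: feat_def thr_def yes_val_def no_val_def)
qed

lemma stump_ensemble_0: "stump_ensemble 0 E \<Longrightarrow> E = []"
  using stump_ensemble_nth(2)[of 0 E 0] by auto

lemma tree_eval_stump:
  assumes "stump_ensemble d E" "j < length E"
  shows "tree_eval (E ! j) x = (if x (feat E j) < thr E j then yes_val E j else no_val E j)"
  by (subst stump_ensemble_nth(1)[OF assms]) simp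

lemma sensitive_Nil: "sensitive d [] F g \<longleftrightarrow> g \<le> 0"
  unfolding sensitive_def prob_def raw_def by auto

definition below_thresholds :: "ensemble \<Rightarrow> real" where
  "below_thresholds E = Min (insert 0 (thr E ` {..<length E})) - 1"
  \<comment> \<open>the 0 only keeps the minimum defined for \<open>E = []\<close>\<close>

definition cand_point :: "ensemble \<Rightarrow> nat \<Rightarrow> real" where
  "cand_point E c = (if c < length E then thr E c else below_thresholds E)"

definition stump_at :: "ensemble \<Rightarrow> nat \<Rightarrow> nat \<Rightarrow> real" where
  "stump_at E j c = (if cand_point E c < thr E j then yes_val E j else no_val E j)"

definition feature_val :: "ensemble \<Rightarrow> nat \<Rightarrow> nat \<Rightarrow> real" where
  "feature_val E f c = (\<Sum>j<length E. if feat E j = f then stump_at E j c else 0)"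

lemma below_thresholds_less: "j < length E \<Longrightarrow> below_thresholds E < thr E j"
proof -
  assume "j < length E"
  then have "Min (insert 0 (thr E ` {..<length E})) \<le> thr E j" by (intro Min_le) auto
  then show ?thesis unfolding below_thresholds_def by simp
qed

lemma stump_at_eq:
  "j < length E \<Longrightarrow> stump_at E j c =
     (if c < length E then (if thr E c < thr E j then yes_val E j else no_val E j)
      else yes_val E j)"
  using below_thresholds_less by (simp add: stump_at_def cand_point_def)

lemma exists_cand_point:
  "\<exists>c\<le>length E. \<forall>j<length E. t < thr E j \<longleftrightarrow> cand_point E c < thr E j"
proof (cases "\<forall>j<length E. t < thr E j")
  case True
  then show ?thesis using below_thresholds_less by (auto simp: cand_point_def)
next
  case False
  let ?S = "{j. j < length E \<and> thr E j \<le> t}"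
  have "Max (thr E ` ?S) \<in> thr E ` ?S" using False by (intro Max_in) auto
  then obtain c where c: "c \<in> ?S" "thr E c = Max (thr E ` ?S)" by auto
  have below: "thr E j \<le> thr E c" if "j \<in> ?S" for j
    using c(2) that by simp
  have "t < thr E j \<longleftrightarrow> thr E c < thr E j" if "j < length E" for j
    using below[of j] c(1) that by force
  then show ?thesis
    using c(1) by (intro exI[of _ c]) (simp add: cand_point_def)
qed

lemma raw_eq_sum_feature_val:
  assumes "stump_ensemble d E"
    and "\<And>f j. f < d \<Longrightarrow> j < length E \<Longrightarrow> x f < thr E j \<longleftrightarrow> cand_point E (Z f) < thr E j"
  shows "raw E x = (\<Sum>f<d. feature_val E f (Z f))"
proof -
  have "raw E x = (\<Sum>j<length E. tree_eval (E ! j) x)"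
    unfolding raw_def by (simp add: sum_list_sum_nth atLeast0LessThan)
  also have "\<dots> = (\<Sum>j<length E. \<Sum>f<d. if feat E j = f then stump_at E j (Z f) else 0)"
  proof (rule sum.cong[OF refl])
    fix j assume j: "j \<in> {..<length E}"
    then have "feat E j < d" using stump_ensemble_nth(2)[OF assms(1)] by auto
    then show "tree_eval (E ! j) x = (\<Sum>f<d. if feat E j = f then stump_at E j (Z f) else 0)"
      using j assms by (simp add: tree_eval_stump stump_at_def)
  qed
  also have "\<dots> = (\<Sum>f<d. feature_val E f (Z f))"
    unfolding feature_val_def by (rule sum.swap)
  finally show ?thesis .
qed

section \<open>Sensitivity via candidate choices\<close>

text \<open>A choice \<open>Y\<close> fixes a candidate for every fixed feature (below \<open>d\<close> and outside \<open>F\<close>);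
  it is 0 elsewhere, so that choices correspond one-to-one to their codes below.\<close>

definition valid_choice :: "nat \<Rightarrow> nat \<Rightarrow> nat set \<Rightarrow> (nat \<Rightarrow> nat) \<Rightarrow> bool" where
  "valid_choice d m F Y \<longleftrightarrow> (\<forall>f. if f < d \<and> f \<notin> F then Y f \<le> m else Y f = 0)"

definition cand_range :: "nat \<Rightarrow> nat set \<Rightarrow> (nat \<Rightarrow> nat) \<Rightarrow> nat \<Rightarrow> nat set" where
  "cand_range m F Y f = (if f \<in> F then {0..m} else {Y f})"

definition max_raw :: "nat \<Rightarrow> ensemble \<Rightarrow> nat set \<Rightarrow> (nat \<Rightarrow> nat) \<Rightarrow> real" where
  "max_raw d E F Y = (\<Sum>f<d. Max (feature_val E f ` cand_range (length E) F Y f))"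

definition min_raw :: "nat \<Rightarrow> ensemble \<Rightarrow> nat set \<Rightarrow> (nat \<Rightarrow> nat) \<Rightarrow> real" where
  "min_raw d E F Y = (\<Sum>f<d. Min (feature_val E f ` cand_range (length E) F Y f))"

definition sigmoid :: "real \<Rightarrow> real" where
  "sigmoid r = 1 / (1 + exp (- r))"

definition gap_separated :: "real \<Rightarrow> real \<Rightarrow> real \<Rightarrow> bool" where
  "gap_separated g r1 r2 \<longleftrightarrow> 1/2 + g \<le> sigmoid r1 \<and> sigmoid r2 \<le> 1/2 - g"

definition good_choice :: "nat \<Rightarrow> ensemble \<Rightarrow> nat set \<Rightarrow> real \<Rightarrow> (nat \<Rightarrow> nat) \<Rightarrow> bool" where
  "good_choice d E F g Y \<longleftrightarrow> gap_separated g (max_raw d E F Y) (min_raw d E F Y)"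

lemma sigmoid_mono: "a \<le> b \<Longrightarrow> sigmoid a \<le> sigmoid b"
  unfolding sigmoid_def by (intro divide_left_mono) (auto simp: add_pos_pos)

lemma cand_range_finite_nonempty:
  "finite (cand_range m F Y f)" "cand_range m F Y f \<noteq> {}"
  by (auto simp: cand_range_def)

lemma sensitive_imp_good_choice:
  assumes "stump_ensemble d E" "sensitive d E F g"
  shows "\<exists>Y. valid_choice d (length E) F Y \<and> good_choice d E F g Y"
proof -
  let ?m = "length E"
  obtain x1 x2 where x: "\<forall>f\<in>{..<d} - F. x1 f = x2 f"
    "1/2 + g \<le> sigmoid (raw E x1)" "sigmoid (raw E x2) \<le> 1/2 - g"
    using assms(2) unfolding sensitive_def prob_def sigmoid_def by blast
  obtain Z where Z: "\<And>t. Z t \<le> ?m \<and> (\<forall>j<?m. t < thr E j \<longleftrightarrow> cand_point E (Z t) < thr E j)"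
    using exists_cand_point[of E] by metis
  define Y where "Y = (\<lambda>f. if f < d \<and> f \<notin> F then Z (x1 f) else 0)"
  have valid: "valid_choice d ?m F Y"
    unfolding valid_choice_def Y_def using Z by auto
  have in_range: "Z (x1 f) \<in> cand_range ?m F Y f" "Z (x2 f) \<in> cand_range ?m F Y f" if "f < d" for f
    using Z that x(1) by (auto simp: cand_range_def Y_def)
  have "raw E x1 = (\<Sum>f<d. feature_val E f (Z (x1 f)))"
    by (rule raw_eq_sum_feature_val[OF assms(1)]) (use Z in blast)
  also have "\<dots> \<le> max_raw d E F Y"
    unfolding max_raw_def using in_range cand_range_finite_nonempty
    by (intro sum_mono Max_ge) auto
  finally have upper: "1/2 + g \<le> sigmoid (max_raw d E F Y)"
    using x(2) sigmoid_mono order_trans by blast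
  have "min_raw d E F Y \<le> (\<Sum>f<d. feature_val E f (Z (x2 f)))"
    unfolding min_raw_def using in_range cand_range_finite_nonempty
    by (intro sum_mono Min_le) auto
  also have "(\<Sum>f<d. feature_val E f (Z (x2 f))) = raw E x2"
    by (rule raw_eq_sum_feature_val[OF assms(1), symmetric]) (use Z in blast)
  finally have "sigmoid (min_raw d E F Y) \<le> 1/2 - g"
    using x(3) sigmoid_mono order_trans by blast
  with upper show ?thesis using valid unfolding good_choice_def gap_separated_def by blast
qed

lemma good_choice_imp_sensitive:
  assumes "stump_ensemble d E" "valid_choice d (length E) F Y"
    and "good_choice d E F g Y"
  shows "sensitive d E F g"
proof -
  let ?R = "cand_range (length E) F Y"
  have "\<exists>c\<in>?R f. feature_val E f c = Max (feature_val E f ` ?R f)"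
    "\<exists>c\<in>?R f. feature_val E f c = Min (feature_val E f ` ?R f)" for f
    using Max_in Min_in cand_range_finite_nonempty
    by (metis (no_types, lifting) finite_imageI image_iff image_is_empty)+
  then obtain Z1 Z2
    where Z1: "\<And>f. Z1 f \<in> ?R f \<and> feature_val E f (Z1 f) = Max (feature_val E f ` ?R f)"
      and Z2: "\<And>f. Z2 f \<in> ?R f \<and> feature_val E f (Z2 f) = Min (feature_val E f ` ?R f)"
    by metis
  have raw_cand: "raw E (\<lambda>f. cand_point E (Z f)) = (\<Sum>f<d. feature_val E f (Z f))" for Z
    by (rule raw_eq_sum_feature_val[OF assms(1)]) simp
  have "raw E (\<lambda>f. cand_point E (Z1 f)) = max_raw d E F Y"
    unfolding raw_cand max_raw_def using Z1 by simp
  moreover have "raw E (\<lambda>f. cand_point E (Z2 f)) = min_raw d E F Y"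
    unfolding raw_cand min_raw_def using Z2 by simp
  moreover have "\<forall>f\<in>{..<d} - F. cand_point E (Z1 f) = cand_point E (Z2 f)"
    using Z1 Z2 by (metis DiffD2 cand_range_def singletonD)
  ultimately show ?thesis
    using assms(3) unfolding sensitive_def prob_def good_choice_def gap_separated_def sigmoid_def
    by metis
qed

theorem sensitive_iff_good_choice:
  assumes "stump_ensemble d E"
  shows "sensitive d E F g \<longleftrightarrow> (\<exists>Y. valid_choice d (length E) F Y \<and> good_choice d E F g Y)"
  using assms sensitive_imp_good_choice good_choice_imp_sensitive by blast

section \<open>Enumerating the choices\<close>

text \<open>Valid choices are enumerated as the numbers below \<open>(m + 1) ^ k\<close> in mixed radix: digit
  \<open>f\<close> has base \<open>m + 1\<close> if \<open>f \<notin> F\<close> and base 1 otherwise.\<close>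

definition digit_weight :: "nat \<Rightarrow> nat set \<Rightarrow> nat \<Rightarrow> nat" where
  "digit_weight m F n = (\<Prod>f<n. if f \<in> F then 1 else Suc m)"

definition choice_code :: "nat \<Rightarrow> nat set \<Rightarrow> (nat \<Rightarrow> nat) \<Rightarrow> nat \<Rightarrow> nat" where
  "choice_code m F Y n = (\<Sum>f<n. Y f * digit_weight m F f)"

definition clear_below :: "nat \<Rightarrow> (nat \<Rightarrow> nat) \<Rightarrow> nat \<Rightarrow> nat" where
  "clear_below f Y = (\<lambda>f'. if f' < f then 0 else Y f')"

lemma digit_weight_Suc:
  "digit_weight m F (Suc n) = digit_weight m F n * (if n \<in> F then 1 else Suc m)"
  unfolding digit_weight_def by simp

lemma digit_weight_pos: "0 < digit_weight m F n"
  unfolding digit_weight_def by (rule prod_pos) auto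

lemma choice_code_Suc: "choice_code m F Y (Suc n) = choice_code m F Y n + Y n * digit_weight m F n"
  unfolding choice_code_def by simp

lemma digit_weight_eq_power: "digit_weight m F d = Suc m ^ card ({..<d} - F)"
proof (induction d)
  case 0
  then show ?case by (simp add: digit_weight_def)
next
  case (Suc d)
  have "{..<Suc d} - F = (if d \<in> F then {..<d} - F else insert d ({..<d} - F))"
    by (auto simp: lessThan_Suc)
  then show ?case using Suc by (simp add: digit_weight_Suc)
qed

lemma choice_code_less_weight:
  assumes "valid_choice d m F Y" "n \<le> d"
  shows "choice_code m F Y n < digit_weight m F n"
  using assms(2)
proof (induction n)
  case 0
  then show ?case by (simp add: choice_code_def digit_weight_def)
next
  case (Suc n)
  then have IH: "choice_code m F Y n < digit_weight m F n" by simp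
  show ?case
  proof (cases "n \<in> F")
    case True
    then have "Y n = 0" using assms(1) unfolding valid_choice_def by (metis (full_types))
    then show ?thesis using IH True by (simp add: choice_code_Suc digit_weight_Suc)
  next
    case False
    then have "Y n \<le> m" using assms(1) Suc.prems unfolding valid_choice_def
      by (metis (full_types) Suc_le_lessD)
    then have "choice_code m F Y n + Y n * digit_weight m F n
        < digit_weight m F n + m * digit_weight m F n"
      using IH by (simp add: add_less_le_mono)
    then show ?thesis using False by (simp add: choice_code_Suc digit_weight_Suc algebra_simps)
  qed
qed

lemma Suc_choice_code_saturated:
  assumes "valid_choice d m F Y" "n \<le> d" "\<forall>f<n. f \<notin> F \<longrightarrow> Y f = m"
  shows "Suc (choice_code m F Y n) = digit_weight m F n"
  using assms(2,3)
proof (induction n)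
  case 0
  then show ?case by (simp add: choice_code_def digit_weight_def)
next
  case (Suc n)
  then have IH: "Suc (choice_code m F Y n) = digit_weight m F n" by simp
  show ?case
  proof (cases "n \<in> F")
    case True
    then have "Y n = 0" using assms(1) unfolding valid_choice_def by (metis (full_types))
    then show ?thesis using IH True by (simp add: choice_code_Suc digit_weight_Suc)
  next
    case False
    then have "Y n = m" using Suc.prems(2) by auto
    then show ?thesis using IH False by (simp add: choice_code_Suc digit_weight_Suc algebra_simps)
  qed
qed

lemma choice_increment:
  assumes "valid_choice d m F Y" "f0 < d" "f0 \<notin> F" "Y f0 < m" "\<forall>f<f0. f \<notin> F \<longrightarrow> Y f = m"
  shows "valid_choice d m F ((clear_below f0 Y)(f0 := Suc (Y f0)))"
    and "choice_code m F ((clear_below f0 Y)(f0 := Suc (Y f0))) d = Suc (choice_code m F Y d)"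
proof -
  let ?Y' = "(clear_below f0 Y)(f0 := Suc (Y f0))"
  show "valid_choice d m F ?Y'"
    using assms(1-4) unfolding valid_choice_def clear_below_def by auto
  have "choice_code m F ?Y' f0 = 0"
    unfolding choice_code_def clear_below_def by simp
  moreover have "Suc (choice_code m F Y f0) = digit_weight m F f0"
    using Suc_choice_code_saturated assms by simp
  ultimately have base: "choice_code m F ?Y' (Suc f0) = Suc (choice_code m F Y (Suc f0))"
    by (simp add: choice_code_Suc)
  have "choice_code m F ?Y' n = Suc (choice_code m F Y n)" if "Suc f0 \<le> n" for n
    using that
  proof (induction n)
    case (Suc n)
    show ?case
    proof (cases "n = f0")
      case True
      then show ?thesis using base by (simp del: fun_upd_apply)
    next
      case False
      then show ?thesis using Suc by (simp add: choice_code_Suc clear_below_def)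
    qed
  qed simp
  then show "choice_code m F ?Y' d = Suc (choice_code m F Y d)" using assms(2) by simp
qed

lemma choice_code_inj:
  assumes "valid_choice d m F Y" "valid_choice d m F Y'"
    "choice_code m F Y d = choice_code m F Y' d"
  shows "Y = Y'"
proof -
  have "\<forall>f<n. Y f = Y' f" if "n \<le> d" "choice_code m F Y n = choice_code m F Y' n" for n
    using that
  proof (induction n)
    case (Suc n)
    let ?w = "digit_weight m F n"
    have low: "choice_code m F Y n < ?w" "choice_code m F Y' n < ?w"
      using choice_code_less_weight assms(1,2) Suc.prems(1) by auto
    have eq: "choice_code m F Y n + Y n * ?w = choice_code m F Y' n + Y' n * ?w"
      using Suc.prems(2) by (simp add: choice_code_Suc)
    then have "(choice_code m F Y n + Y n * ?w) div ?w = (choice_code m F Y' n + Y' n * ?w) div ?w"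
      by simp
    then have "Y n = Y' n" using low digit_weight_pos[of m F n] by simp
    then show ?case using Suc eq less_Suc_eq by auto
  qed simp
  then have "\<forall>f<d. Y f = Y' f" using assms(3) by blast
  moreover have "Y f = Y' f" if "d \<le> f" for f
    using assms(1,2) that unfolding valid_choice_def by (metis not_le)
  ultimately show ?thesis by (metis not_le ext)
qed

section \<open>Running programs\<close>

definition steps_within :: "program \<Rightarrow> nat \<Rightarrow> state \<Rightarrow> state \<Rightarrow> bool" where
  "steps_within P t s s' \<longleftrightarrow> (\<exists>n\<le>t. run P n s = s')"

definition reaches :: "program \<Rightarrow> state \<Rightarrow> nat \<Rightarrow> (state \<Rightarrow> bool) \<Rightarrow> bool" where
  "reaches P s t Q \<longleftrightarrow> (\<exists>s'. steps_within P t s s' \<and> Q s')"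

definition unchanged_except :: "state \<Rightarrow> state \<Rightarrow> nat set \<Rightarrow> nat set \<Rightarrow> bool" where
  "unchanged_except s s' A B \<longleftrightarrow>
     (\<forall>a. a \<notin> A \<longrightarrow> ireg s' a = ireg s a) \<and> (\<forall>a. a \<notin> B \<longrightarrow> rreg s' a = rreg s a)"

lemma run_Suc: "run P (Suc n) s = run P n (step P s)"
  unfolding run_def funpow_Suc_right comp_def ..

lemma run_add: "run P (a + b) s = run P b (run P a s)"
  unfolding run_def by (metis add.commute comp_apply funpow_add)

lemma steps_within_trans:
  assumes "steps_within P t1 s s1" "steps_within P t2 s1 s2" "t1 + t2 \<le> t"
  shows "steps_within P t s s2"
proof -
  obtain n1 n2 where "n1 \<le> t1" "run P n1 s = s1" "n2 \<le> t2" "run P n2 s1 = s2"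
    using assms(1,2) unfolding steps_within_def by blast
  then show ?thesis
    unfolding steps_within_def using assms(3) by (intro exI[of _ "n1 + n2"]) (simp add: run_add)
qed

lemma reaches_now: "Q s \<Longrightarrow> reaches P s t Q"
  unfolding reaches_def steps_within_def
  by (intro exI[of _ s] conjI exI[of _ 0]) (simp_all add: run_def)

lemma reaches_at_pc: "pc s = L \<Longrightarrow> R s \<Longrightarrow> reaches P s t (\<lambda>s'. pc s' = L \<and> R s')"
  by (rule reaches_now) simp

lemma reaches_stepI:
  assumes "pc s < length P \<and> P ! pc s \<noteq> Halt \<and> 0 < t"
    and "reaches P (exec (P ! pc s) s) (t - 1) Q"
  shows "reaches P s t Q"
proof -
  obtain n where n: "n \<le> t - 1" "Q (run P n (exec (P ! pc s) s))"
    using assms(2) unfolding reaches_def steps_within_def by blast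
  have "run P (Suc n) s = run P n (exec (P ! pc s) s)"
    using assms(1) by (simp add: run_Suc step_def halted_def)
  moreover have "Suc n \<le> t" using n(1) assms(1) by (elim conjE) linarith
  ultimately show ?thesis
    unfolding reaches_def steps_within_def using n(2) by blast
qed

lemma reaches_if_pc:
  "(C \<Longrightarrow> reaches P (s\<lparr>pc := a\<rparr>) t Q) \<Longrightarrow> (\<not> C \<Longrightarrow> reaches P (s\<lparr>pc := b\<rparr>) t Q) \<Longrightarrow>
   reaches P (s\<lparr>pc := if C then a else b\<rparr>) t Q"
  by simp

lemma reaches_mono:
  "reaches P s t Q \<Longrightarrow> t \<le> t' \<Longrightarrow> (\<And>s. Q s \<Longrightarrow> Q' s) \<Longrightarrow> reaches P s t' Q'"
  unfolding reaches_def steps_within_def by (blast intro: order_trans)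

lemma reaches_after:
  "steps_within P t1 s s1 \<Longrightarrow> reaches P s1 t2 Q \<Longrightarrow> t1 + t2 \<le> t \<Longrightarrow> reaches P s t Q"
  unfolding reaches_def using steps_within_trans by blast

lemma unchanged_except_trans:
  "unchanged_except s s1 A B \<Longrightarrow> unchanged_except s1 s2 A' B' \<Longrightarrow>
   A \<union> A' \<subseteq> A'' \<Longrightarrow> B \<union> B' \<subseteq> B'' \<Longrightarrow> unchanged_except s s2 A'' B''"
  unfolding unchanged_except_def by (metis Un_iff subsetD)

lemma decides_within_iff_reaches:
  "decides_within P s t b \<longleftrightarrow> reaches P s t (\<lambda>s'. halted P s' \<and> ireg s' 0 = (if b then 1 else 0))"
  unfolding decides_within_def reaches_def steps_within_def by blast

lemma decides_within_mono: "decides_within P s t b \<Longrightarrow> t \<le> t' \<Longrightarrow> decides_within P s t' b"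
  unfolding decides_within_iff_reaches by (rule reaches_mono)

section \<open>The program and its memory layout\<close>

definition prog :: program where "prog = [
  \<comment> \<open>0: park I2 and I3 above the input, jump to 158 if d = m = 0\<close>
  IAdd 1 0 1, IAdd 1 0 1, IAdd 1 0 1, IAdd 1 0 1,
  IJle 1 0 158, IStore 2 1, IConst 2 18, IAdd 1 1 2,
  IConst 2 3, IAdd 2 1 2, IStore 3 2, IConst 3 4,
  \<comment> \<open>12: copy the integer input upwards by m + 4d + 18\<close>
  IAdd 2 3 0, IAdd 2 2 0, IJle 2 1 16, IJle 0 0 23,
  ILoad 2 3, IAdd 3 3 1, IStore 2 3, ISub 3 3 1,
  IConst 2 1, IAdd 3 3 2, IJle 0 0 12,
  \<comment> \<open>23: move the parked I2 to m + 4d + 20, load the constant registers\<close>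
  IConst 2 18, ISub 2 1 2, ILoad 3 2, IConst 2 2,
  IAdd 2 1 2, IStore 3 2, IConst 2 1, IConst 16 0,
  IConst 3 18, ISub 3 1 3, ISub 3 3 0, ISub 3 3 0,
  ISub 3 3 0, ISub 3 3 0, IConst 4 2, IAdd 4 1 4,
  IAdd 5 4 3, IConst 6 19, IAdd 6 1 6, IAdd 6 6 3,
  IAdd 6 6 0, IAdd 6 6 0, IConst 7 17, IAdd 7 7 3,
  IAdd 7 7 3, IAdd 7 7 3, IConst 8 1, IConst 9 (-1),
  IAdd 9 7 9, IAdd 10 3 3, IAdd 10 10 3,
  \<comment> \<open>54: copy the real input upwards by 3m + 16\<close>
  IJle 8 10 56, IJle 0 0 61, RLoad 1 8, IAdd 11 8 9,
  RStore 1 11, IAdd 8 8 2, IJle 0 0 54,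
  \<comment> \<open>61: R10, R11, R12 := 1, 0, 2\<close>
  RConst 10 1, RConst 11 0, RConst 12 2,
  \<comment> \<open>64: next choice: R2 and R3 accumulate max_raw and min_raw over the features I8\<close>
  RConst 2 0, RConst 3 0, IConst 8 0,
  \<comment> \<open>67: candidate range [I11, I12] of feature I8\<close>
  IJle 0 8 125, IAdd 13 5 8, ILoad 14 13, IJle 2 14 75,
  IAdd 13 6 8, ILoad 11 13, IAdd 12 11 16, IJle 0 0 77,
  IConst 11 0, IAdd 12 3 16, IAdd 9 11 16,
  \<comment> \<open>78: loop over the candidates I9 of the range\<close>
  IJle 9 12 80, IJle 0 0 121,
  \<comment> \<open>80: R6 := feature_val at candidate I9, summing over the stumps I10\<close>
  RConst 6 0, IAdd 15 9 9, IAdd 15 15 9, IAdd 15 15 7,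
  RLoad 7 15, IConst 10 0, IAdd 13 4 16, IAdd 15 7 16,
  IJle 3 10 111, ILoad 14 13, IJle 14 8 92, IJle 0 0 105,
  IJle 8 14 94, IJle 0 0 105, IJle 3 9 97, RLoad 8 15,
  RJle 8 7 101, IAdd 14 15 2, RLoad 9 14, RAdd 6 6 9,
  IJle 0 0 105, IAdd 14 15 2, IAdd 14 14 2, RLoad 9 14,
  RAdd 6 6 9, IAdd 10 10 2, IAdd 13 13 2, IAdd 15 15 2,
  IAdd 15 15 2, IAdd 15 15 2, IJle 0 0 88,
  \<comment> \<open>111: fold R6 into the maximum R4 and the minimum R5\<close>
  IJle 9 11 117, RJle 6 4 114, RAdd 4 6 11, RJle 5 6 116,
  RAdd 5 6 11, IJle 0 0 119, RAdd 4 6 11, RAdd 5 6 11,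
  IAdd 9 9 2, IJle 0 0 78,
  \<comment> \<open>121: add R4, R5 to R2, R3; next feature\<close>
  RAdd 2 2 4, RAdd 3 3 5, IAdd 8 8 2, IJle 0 0 67,
  \<comment> \<open>125: gap test, output 1 on success\<close>
  RSub 9 11 2, RExp 9 9, RAdd 9 10 9, RDiv 9 10 9,
  RDiv 13 10 12, RAdd 14 13 0, RJle 14 9 133, IJle 0 0 142,
  RSub 9 11 3, RExp 9 9, RAdd 9 10 9, RDiv 9 10 9,
  RSub 14 13 0, RJle 9 14 140, IJle 0 0 142, IConst 0 1,
  Halt,
  \<comment> \<open>142: increment the choice, output 0 on overflow\<close>
  IConst 8 0, IJle 0 8 156, IAdd 13 5 8, ILoad 14 13,
  IJle 2 14 154, IAdd 13 6 8, ILoad 14 13, IJle 3 14 153,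
  IAdd 14 14 2, IStore 14 13, IJle 0 0 64, IStore 16 13,
  IAdd 8 8 2, IJle 0 0 143, IConst 0 0, Halt,
  \<comment> \<open>158: d = 0: output whether g \<le> 0\<close>
  RConst 1 0, RJle 0 1 162, IConst 0 0, Halt,
  IConst 0 1, Halt
  ]"

lemma length_prog [simp]: "length prog = 164"
  unfolding prog_def by code_simp

lemma fetch [simp]:
  "prog ! 0 = IAdd 1 0 1" "prog ! Suc 0 = IAdd 1 0 1" "prog ! 2 = IAdd 1 0 1"
  "prog ! 3 = IAdd 1 0 1" "prog ! 4 = IJle 1 0 158" "prog ! 5 = IStore 2 1"
  "prog ! 6 = IConst 2 18" "prog ! 7 = IAdd 1 1 2" "prog ! 8 = IConst 2 3"
  "prog ! 9 = IAdd 2 1 2" "prog ! 10 = IStore 3 2" "prog ! 11 = IConst 3 4"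
  "prog ! 12 = IAdd 2 3 0" "prog ! 13 = IAdd 2 2 0" "prog ! 14 = IJle 2 1 16"
  "prog ! 15 = IJle 0 0 23" "prog ! 16 = ILoad 2 3" "prog ! 17 = IAdd 3 3 1"
  "prog ! 18 = IStore 2 3" "prog ! 19 = ISub 3 3 1" "prog ! 20 = IConst 2 1"
  "prog ! 21 = IAdd 3 3 2" "prog ! 22 = IJle 0 0 12" "prog ! 23 = IConst 2 18"
  "prog ! 24 = ISub 2 1 2" "prog ! 25 = ILoad 3 2" "prog ! 26 = IConst 2 2"
  "prog ! 27 = IAdd 2 1 2" "prog ! 28 = IStore 3 2" "prog ! 29 = IConst 2 1"
  "prog ! 30 = IConst 16 0" "prog ! 31 = IConst 3 18" "prog ! 32 = ISub 3 1 3"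
  "prog ! 33 = ISub 3 3 0" "prog ! 34 = ISub 3 3 0" "prog ! 35 = ISub 3 3 0"
  "prog ! 36 = ISub 3 3 0" "prog ! 37 = IConst 4 2" "prog ! 38 = IAdd 4 1 4"
  "prog ! 39 = IAdd 5 4 3" "prog ! 40 = IConst 6 19" "prog ! 41 = IAdd 6 1 6"
  "prog ! 42 = IAdd 6 6 3" "prog ! 43 = IAdd 6 6 0" "prog ! 44 = IAdd 6 6 0"
  "prog ! 45 = IConst 7 17" "prog ! 46 = IAdd 7 7 3" "prog ! 47 = IAdd 7 7 3"
  "prog ! 48 = IAdd 7 7 3" "prog ! 49 = IConst 8 1" "prog ! 50 = IConst 9 (-1)"
  "prog ! 51 = IAdd 9 7 9" "prog ! 52 = IAdd 10 3 3" "prog ! 53 = IAdd 10 10 3"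
  "prog ! 54 = IJle 8 10 56" "prog ! 55 = IJle 0 0 61" "prog ! 56 = RLoad 1 8"
  "prog ! 57 = IAdd 11 8 9" "prog ! 58 = RStore 1 11" "prog ! 59 = IAdd 8 8 2"
  "prog ! 60 = IJle 0 0 54" "prog ! 61 = RConst 10 1" "prog ! 62 = RConst 11 0"
  "prog ! 63 = RConst 12 2" "prog ! 64 = RConst 2 0" "prog ! 65 = RConst 3 0"
  "prog ! 66 = IConst 8 0" "prog ! 67 = IJle 0 8 125" "prog ! 68 = IAdd 13 5 8"
  "prog ! 69 = ILoad 14 13" "prog ! 70 = IJle 2 14 75" "prog ! 71 = IAdd 13 6 8"
  "prog ! 72 = ILoad 11 13" "prog ! 73 = IAdd 12 11 16" "prog ! 74 = IJle 0 0 77"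
  "prog ! 75 = IConst 11 0" "prog ! 76 = IAdd 12 3 16" "prog ! 77 = IAdd 9 11 16"
  "prog ! 78 = IJle 9 12 80" "prog ! 79 = IJle 0 0 121" "prog ! 80 = RConst 6 0"
  "prog ! 81 = IAdd 15 9 9" "prog ! 82 = IAdd 15 15 9" "prog ! 83 = IAdd 15 15 7"
  "prog ! 84 = RLoad 7 15" "prog ! 85 = IConst 10 0" "prog ! 86 = IAdd 13 4 16"
  "prog ! 87 = IAdd 15 7 16" "prog ! 88 = IJle 3 10 111" "prog ! 89 = ILoad 14 13"
  "prog ! 90 = IJle 14 8 92" "prog ! 91 = IJle 0 0 105" "prog ! 92 = IJle 8 14 94"
  "prog ! 93 = IJle 0 0 105" "prog ! 94 = IJle 3 9 97" "prog ! 95 = RLoad 8 15"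
  "prog ! 96 = RJle 8 7 101" "prog ! 97 = IAdd 14 15 2" "prog ! 98 = RLoad 9 14"
  "prog ! 99 = RAdd 6 6 9" "prog ! 100 = IJle 0 0 105" "prog ! 101 = IAdd 14 15 2"
  "prog ! 102 = IAdd 14 14 2" "prog ! 103 = RLoad 9 14" "prog ! 104 = RAdd 6 6 9"
  "prog ! 105 = IAdd 10 10 2" "prog ! 106 = IAdd 13 13 2" "prog ! 107 = IAdd 15 15 2"
  "prog ! 108 = IAdd 15 15 2" "prog ! 109 = IAdd 15 15 2" "prog ! 110 = IJle 0 0 88"
  "prog ! 111 = IJle 9 11 117" "prog ! 112 = RJle 6 4 114" "prog ! 113 = RAdd 4 6 11"
  "prog ! 114 = RJle 5 6 116" "prog ! 115 = RAdd 5 6 11" "prog ! 116 = IJle 0 0 119"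
  "prog ! 117 = RAdd 4 6 11" "prog ! 118 = RAdd 5 6 11" "prog ! 119 = IAdd 9 9 2"
  "prog ! 120 = IJle 0 0 78" "prog ! 121 = RAdd 2 2 4" "prog ! 122 = RAdd 3 3 5"
  "prog ! 123 = IAdd 8 8 2" "prog ! 124 = IJle 0 0 67" "prog ! 125 = RSub 9 11 2"
  "prog ! 126 = RExp 9 9" "prog ! 127 = RAdd 9 10 9" "prog ! 128 = RDiv 9 10 9"
  "prog ! 129 = RDiv 13 10 12" "prog ! 130 = RAdd 14 13 0" "prog ! 131 = RJle 14 9 133"
  "prog ! 132 = IJle 0 0 142" "prog ! 133 = RSub 9 11 3" "prog ! 134 = RExp 9 9"
  "prog ! 135 = RAdd 9 10 9" "prog ! 136 = RDiv 9 10 9" "prog ! 137 = RSub 14 13 0"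
  "prog ! 138 = RJle 9 14 140" "prog ! 139 = IJle 0 0 142" "prog ! 140 = IConst 0 1"
  "prog ! 141 = Halt" "prog ! 142 = IConst 8 0" "prog ! 143 = IJle 0 8 156"
  "prog ! 144 = IAdd 13 5 8" "prog ! 145 = ILoad 14 13" "prog ! 146 = IJle 2 14 154"
  "prog ! 147 = IAdd 13 6 8" "prog ! 148 = ILoad 14 13" "prog ! 149 = IJle 3 14 153"
  "prog ! 150 = IAdd 14 14 2" "prog ! 151 = IStore 14 13" "prog ! 152 = IJle 0 0 64"
  "prog ! 153 = IStore 16 13" "prog ! 154 = IAdd 8 8 2" "prog ! 155 = IJle 0 0 143"
  "prog ! 156 = IConst 0 0" "prog ! 157 = Halt" "prog ! 158 = RConst 1 0"
  "prog ! 159 = RJle 0 1 162" "prog ! 160 = IConst 0 0" "prog ! 161 = Halt"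
  "prog ! 162 = IConst 0 1" "prog ! 163 = Halt"
  unfolding prog_def by code_simp+

definition feat_base :: "nat \<Rightarrow> nat \<Rightarrow> nat" where "feat_base d m = m + 4*d + 20"

definition flag_base :: "nat \<Rightarrow> nat \<Rightarrow> nat" where "flag_base d m = 2*m + 4*d + 20"

definition choice_base :: "nat \<Rightarrow> nat \<Rightarrow> nat" where "choice_base d m = 2*m + 6*d + 37"

definition stump_base :: "nat \<Rightarrow> nat" where "stump_base m = 3*m + 17"

definition const_regs :: "nat \<Rightarrow> nat \<Rightarrow> state \<Rightarrow> bool" where
  "const_regs d m s \<longleftrightarrow>
    ireg s 0 = int d \<and> ireg s 2 = 1 \<and> ireg s 3 = int m \<and> ireg s 16 = 0 \<and>
    ireg s 4 = int (feat_base d m) \<and> ireg s 5 = int (flag_base d m) \<and>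
    ireg s 6 = int (choice_base d m) \<and> ireg s 7 = int (stump_base m)"

definition mem_inv :: "nat \<Rightarrow> ensemble \<Rightarrow> nat set \<Rightarrow> real \<Rightarrow> state \<Rightarrow> (nat \<Rightarrow> nat) \<Rightarrow> bool" where
  "mem_inv d E F g s Y \<longleftrightarrow> const_regs d (length E) s \<and>
    (\<forall>j<length E. ireg s (feat_base d (length E) + j) = int (feat E j)) \<and>
    (\<forall>f<d. ireg s (flag_base d (length E) + f) = (if f \<in> F then 1 else 0)) \<and>
    (\<forall>f<d. ireg s (choice_base d (length E) + f) = int (Y f)) \<and>
    (\<forall>j<length E. rreg s (stump_base (length E) + 3*j) = thr E j \<and>
       rreg s (stump_base (length E) + 3*j + 1) = yes_val E j \<and>
       rreg s (stump_base (length E) + 3*j + 2) = no_val E j) \<and>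
    rreg s 0 = g \<and> rreg s 10 = 1 \<and> rreg s 11 = 0 \<and> rreg s 12 = 2"

lemma mem_inv_unchanged:
  assumes "mem_inv d E F g s Y" "unchanged_except s s' A B"
    "A \<subseteq> {1,8,9,10,11,12,13,14,15}" "B \<subseteq> {1,2,3,4,5,6,7,8,9,13,14}"
  shows "mem_inv d E F g s' Y"
proof -
  have "ireg s' a = ireg s a" if "a \<notin> {1,8,9,10,11,12,13,14,15}" for a
    using assms(2,3) that unfolding unchanged_except_def by blast
  moreover have "rreg s' a = rreg s a" if "a \<notin> {1,2,3,4,5,6,7,8,9,13,14}" for a
    using assms(2,4) that unfolding unchanged_except_def by blast
  ultimately show ?thesis using assms(1) unfolding mem_inv_def const_regs_def
    by (simp add: feat_base_def flag_base_def choice_base_def stump_base_def)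
qed

lemma mem_inv_update_choice:
  assumes "mem_inv d E F g s Y" "unchanged_except s s' (insert (choice_base d (length E) + f) A) B"
    "A \<subseteq> {1,8,9,10,11,12,13,14,15}" "B \<subseteq> {1,2,3,4,5,6,7,8,9,13,14}"
    "f < d" "ireg s' (choice_base d (length E) + f) = int v"
  shows "mem_inv d E F g s' (Y(f := v))"
proof -
  let ?a = "choice_base d (length E) + f"
  have i: "ireg s' a = ireg s a" if "a \<notin> {1,8,9,10,11,12,13,14,15}" "a \<noteq> ?a" for a
    using assms(2,3) that unfolding unchanged_except_def by blast
  have r: "rreg s' a = rreg s a" if "a \<notin> {1,2,3,4,5,6,7,8,9,13,14}" for a
    using assms(2,4) that unfolding unchanged_except_def by blast
  have "ireg s' (choice_base d (length E) + f') = int ((Y(f := v)) f')" if "f' < d" for f'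
    using assms(1,6) i[of "choice_base d (length E) + f'"] that
    by (cases "f' = f") (auto simp: mem_inv_def const_regs_def choice_base_def)
  then show ?thesis using assms(1) unfolding mem_inv_def const_regs_def
    by (simp add: i r feat_base_def flag_base_def choice_base_def stump_base_def)
qed

lemma encode_simps:
  "pc (encode d E F g) = 0" "ireg (encode d E F g) 0 = int d"
  "ireg (encode d E F g) 1 = int (length E)" "rreg (encode d E F g) 0 = g"
  by (simp_all add: encode_def Let_def)

lemma ireg_encode_feat: "j < length E \<Longrightarrow> ireg (encode d E F g) (2 + j) = int (feat E j)"
  by (simp add: encode_def Let_def feat_def)

lemma ireg_encode_flag:
  "f < d \<Longrightarrow> ireg (encode d E F g) (2 + length E + f) = (if f \<in> F then 1 else 0)"
  by (simp add: encode_def Let_def)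

lemma ireg_encode_beyond: "2 + length E + d \<le> a \<Longrightarrow> ireg (encode d E F g) a = 0"
  by (simp add: encode_def Let_def)

lemma rreg_encode_stump:
  assumes "j < length E"
  shows "rreg (encode d E F g) (1 + 3*j) = thr E j" "rreg (encode d E F g) (2 + 3*j) = yes_val E j"
    "rreg (encode d E F g) (3 + 3*j) = no_val E j"
proof -
  have "Suc (3*j) div 3 = j" "Suc (3*j) mod 3 = 1" "Suc (Suc (3*j)) div 3 = j"
    "Suc (Suc (3*j)) mod 3 = 2"
    by presburger+
  then show "rreg (encode d E F g) (1 + 3*j) = thr E j"
    "rreg (encode d E F g) (2 + 3*j) = yes_val E j"
    "rreg (encode d E F g) (3 + 3*j) = no_val E j"
    using assms by (simp_all add: encode_def Let_def thr_def yes_val_def no_val_def)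
qed

declare nat_add_distrib [simp] nat_mult_distrib [simp]

text \<open>Starting from address 0 the program counter passes through \<open>Suc 0\<close> and \<open>Suc (Suc 0)\<close>,
  which the simplifier does not turn back into numerals; hence the extra rule in the first two
  blocks.\<close>

lemma exec_empty_input:
  assumes "pc s = 0" "ireg s 0 = 0" "ireg s 1 = 0" "rreg s 0 = g"
  shows "reaches prog s 8 (\<lambda>s'. pc s' = (if g \<le> 0 then 163 else 161) \<and>
     ireg s' 0 = (if g \<le> 0 then 1 else 0))"
  by (insert assms, rule reaches_stepI, simp add: numeral_2_eq_2[symmetric],
      simp add: numeral_2_eq_2[symmetric] split del: if_split, (rule reaches_if_pc)?)
    ((rule reaches_at_pc, (simp; fail), (auto simp: unchanged_except_def add_ac)[1])
      | (rule reaches_stepI, simp add: numeral_2_eq_2[symmetric],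
         simp add: numeral_2_eq_2[symmetric] split del: if_split, (rule reaches_if_pc)?))+

lemma exec_boot_prologue:
  assumes "pc s = 0" "ireg s 0 = int d" "ireg s 1 = int m" "1 \<le> d"
  shows "reaches prog s 12 (\<lambda>s'. pc s' = 12 \<and> ireg s' 0 = int d \<and> ireg s' 1 = int (m + 4*d + 18) \<and>
     ireg s' 3 = 4 \<and> ireg s' (m + 4*d) = ireg s 2 \<and> ireg s' (m + 4*d + 21) = ireg s 3 \<and>
     unchanged_except s s' {1,2,3,m + 4*d, m + 4*d + 21} {})"
  by (insert assms, rule reaches_stepI, simp add: numeral_2_eq_2[symmetric],
      simp add: numeral_2_eq_2[symmetric] split del: if_split, (rule reaches_if_pc)?)
    ((rule reaches_at_pc, (simp; fail), (auto simp: unchanged_except_def add_ac)[1])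
      | (rule reaches_stepI, simp add: numeral_2_eq_2[symmetric],
         simp add: numeral_2_eq_2[symmetric] split del: if_split, (rule reaches_if_pc)?))+

lemma exec_int_copy_step:
  assumes "pc s = 12" "ireg s 3 = int r" "ireg s 0 = int d" "ireg s 1 = int q" "r + 2*d \<le> q"
    "4 \<le> r"
  shows "reaches prog s 10 (\<lambda>s'. pc s' = 12 \<and> ireg s' 3 = int (Suc r) \<and>
     ireg s' (q + r) = ireg s r \<and> unchanged_except s s' {2,3,q+r} {})"
  by (insert assms, rule reaches_stepI, simp, simp split del: if_split, (rule reaches_if_pc)?)
    ((rule reaches_at_pc, (simp; fail), (auto simp: unchanged_except_def add_ac)[1])
      | (rule reaches_stepI, simp, simp split del: if_split, (rule reaches_if_pc)?))+

lemma exec_int_copy_exit: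
  assumes "pc s = 12" "ireg s 3 = int r" "ireg s 0 = int d" "ireg s 1 = int q" "q < r + 2*d"
  shows "reaches prog s 4 (\<lambda>s'. pc s' = 23 \<and> unchanged_except s s' {2} {})"
  by (insert assms, rule reaches_stepI, simp, simp split del: if_split, (rule reaches_if_pc)?)
    ((rule reaches_at_pc, (simp; fail), (auto simp: unchanged_except_def add_ac)[1])
      | (rule reaches_stepI, simp, simp split del: if_split, (rule reaches_if_pc)?))+

lemma exec_setup:
  assumes "pc s = 23" "ireg s 0 = int d" "ireg s 1 = int (m + 4*d + 18)" "ireg s (m + 4*d) = v"
    "1 \<le> d"
  shows "reaches prog s 31 (\<lambda>s'. pc s' = 54 \<and> ireg s' 0 = int d \<and> ireg s' (m + 4*d + 20) = v \<and>
     ireg s' 2 = 1 \<and> ireg s' 16 = 0 \<and> ireg s' 3 = int m \<and> ireg s' 4 = int (feat_base d m) \<and>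
     ireg s' 5 = int (flag_base d m) \<and> ireg s' 6 = int (choice_base d m) \<and>
     ireg s' 7 = int (stump_base m) \<and> ireg s' 8 = 1 \<and> ireg s' 9 = int (3*m + 16) \<and>
     ireg s' 10 = int (3*m) \<and> unchanged_except s s' {2,3,4,5,6,7,8,9,10,16, m + 4*d + 20} {})"
  unfolding feat_base_def flag_base_def choice_base_def stump_base_def
  by (insert assms, rule reaches_stepI, simp, simp split del: if_split, (rule reaches_if_pc)?)
    ((rule reaches_at_pc, (simp; fail), (auto simp: unchanged_except_def add_ac)[1])
      | (rule reaches_stepI, simp, simp split del: if_split, (rule reaches_if_pc)?))+

lemma exec_real_copy_step:
  assumes "pc s = 54" "ireg s 8 = int a" "ireg s 9 = int T" "ireg s 10 = int L" "a \<le> L"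
    "ireg s 2 = 1" "T \<ge> 2"
  shows "reaches prog s 6 (\<lambda>s'. pc s' = 54 \<and> ireg s' 8 = int (Suc a) \<and>
     rreg s' (a + T) = rreg s a \<and> unchanged_except s s' {8,11} {1, a + T})"
  by (insert assms, rule reaches_stepI, simp, simp split del: if_split, (rule reaches_if_pc)?)
    ((rule reaches_at_pc, (simp; fail), (auto simp: unchanged_except_def add_ac)[1])
      | (rule reaches_stepI, simp, simp split del: if_split, (rule reaches_if_pc)?))+

lemma exec_real_copy_exit:
  assumes "pc s = 54" "ireg s 8 = int a" "ireg s 10 = int L" "L < a"
  shows "reaches prog s 2 (\<lambda>s'. pc s' = 61 \<and> unchanged_except s s' {} {})"
  by (insert assms, rule reaches_stepI, simp, simp split del: if_split, (rule reaches_if_pc)?)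
    ((rule reaches_at_pc, (simp; fail), (auto simp: unchanged_except_def add_ac)[1])
      | (rule reaches_stepI, simp, simp split del: if_split, (rule reaches_if_pc)?))+

lemma exec_real_constants:
  assumes "pc s = 61"
  shows "reaches prog s 3 (\<lambda>s'. pc s' = 64 \<and> rreg s' 10 = 1 \<and> rreg s' 11 = 0 \<and> rreg s' 12 = 2 \<and>
     unchanged_except s s' {} {10,11,12})"
  by (insert assms, rule reaches_stepI, simp, simp split del: if_split, (rule reaches_if_pc)?)
    ((rule reaches_at_pc, (simp; fail), (auto simp: unchanged_except_def add_ac)[1])
      | (rule reaches_stepI, simp, simp split del: if_split, (rule reaches_if_pc)?))+

lemma exec_choice_start:
  assumes "pc s = 64"
  shows "reaches prog s 3 (\<lambda>s'. pc s' = 67 \<and> rreg s' 2 = 0 \<and> rreg s' 3 = 0 \<and> ireg s' 8 = 0 \<and>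
     unchanged_except s s' {8} {2,3})"
  by (insert assms, rule reaches_stepI, simp, simp split del: if_split, (rule reaches_if_pc)?)
    ((rule reaches_at_pc, (simp; fail), (auto simp: unchanged_except_def add_ac)[1])
      | (rule reaches_stepI, simp, simp split del: if_split, (rule reaches_if_pc)?))+

lemma exec_feature_start:
  assumes "pc s = 67" "ireg s 0 = int d" "ireg s 8 = int f" "f < d" "ireg s 5 = int flb"
    "ireg s (flb + f) = (if fin then 1 else 0)" "ireg s 2 = 1" "ireg s 6 = int yb"
    "ireg s (yb + f) = int y" "ireg s 3 = int m" "ireg s 16 = 0" "flb \<ge> 17" "yb \<ge> 17"
  shows "reaches prog s 9 (\<lambda>s'. pc s' = 78 \<and> ireg s' 9 = int (if fin then 0 else y) \<and>
     ireg s' 11 = int (if fin then 0 else y) \<and> ireg s' 12 = int (if fin then m else y) \<and>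
     unchanged_except s s' {9,11,12,13,14} {})"
  by (insert assms, rule reaches_stepI, simp, simp split del: if_split, (rule reaches_if_pc)?)
    ((rule reaches_at_pc, (simp; fail), (auto simp: unchanged_except_def add_ac)[1])
      | (rule reaches_stepI, simp, simp split del: if_split, (rule reaches_if_pc)?))+

lemma exec_feature_exit:
  assumes "pc s = 67" "ireg s 8 = int f" "ireg s 0 = int d" "d \<le> f"
  shows "reaches prog s 1 (\<lambda>s'. pc s' = 125 \<and> unchanged_except s s' {} {})"
  by (insert assms, rule reaches_stepI, simp, simp split del: if_split, (rule reaches_if_pc)?)
    ((rule reaches_at_pc, (simp; fail), (auto simp: unchanged_except_def add_ac)[1])
      | (rule reaches_stepI, simp, simp split del: if_split, (rule reaches_if_pc)?))+

lemma exec_cand_start: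
  assumes "pc s = 78" "ireg s 9 = int c" "ireg s 12 = int hi" "c \<le> hi" "ireg s 4 = int fb"
    "ireg s 7 = int rb" "ireg s 16 = 0" "rreg s (rb + 3*c) = tc" "rb \<ge> 17"
  shows "reaches prog s 9 (\<lambda>s'. pc s' = 88 \<and> ireg s' 10 = 0 \<and> ireg s' 13 = int fb \<and>
     ireg s' 15 = int rb \<and> rreg s' 6 = 0 \<and> rreg s' 7 = tc \<and>
     unchanged_except s s' {10,13,15} {6,7})"
  by (insert assms, rule reaches_stepI, simp, simp split del: if_split, (rule reaches_if_pc)?)
    ((rule reaches_at_pc, (simp; fail), (auto simp: unchanged_except_def add_ac)[1])
      | (rule reaches_stepI, simp, simp split del: if_split, (rule reaches_if_pc)?))+

lemma exec_cand_exit: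
  assumes "pc s = 78" "ireg s 9 = int c" "ireg s 12 = int hi" "hi < c"
  shows "reaches prog s 2 (\<lambda>s'. pc s' = 121 \<and> unchanged_except s s' {} {})"
  by (insert assms, rule reaches_stepI, simp, simp split del: if_split, (rule reaches_if_pc)?)
    ((rule reaches_at_pc, (simp; fail), (auto simp: unchanged_except_def add_ac)[1])
      | (rule reaches_stepI, simp, simp split del: if_split, (rule reaches_if_pc)?))+

lemma exec_stump_step:
  assumes "pc s = 88" "ireg s 3 = int m" "ireg s 2 = 1" "ireg s 8 = int f" "ireg s 9 = int c"
    "ireg s 10 = int j" "ireg s 13 = int (fb + j)" "ireg s 15 = int (rb + 3*j)" "j < m" "c \<le> m"
    "ireg s (fb + j) = int fj" "rreg s (rb + 3*j) = tj" "rreg s (rb + 3*j+1) = yj"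
    "rreg s (rb + 3*j+2) = nj" "rreg s 7 = tc" "rreg s 6 = v" "fb \<ge> 17" "rb \<ge> 17"
  shows "reaches prog s 20 (\<lambda>s'. pc s' = 88 \<and> ireg s' 10 = int (Suc j) \<and>
     ireg s' 13 = int (fb + Suc j) \<and> ireg s' 15 = int (rb + 3 * Suc j) \<and>
     rreg s' 6 = v + (if fj = f then (if c < m then (if tc < tj then yj else nj) else yj) else 0) \<and>
     unchanged_except s s' {10,13,14,15} {6,8,9})"
  by (insert assms, rule reaches_stepI, simp, simp split del: if_split, (rule reaches_if_pc)?)
    ((rule reaches_at_pc, (simp; fail), (auto simp: unchanged_except_def add_ac)[1])
      | (rule reaches_stepI, simp, simp split del: if_split, (rule reaches_if_pc)?))+

lemma exec_cand_end:
  assumes "pc s = 111" "ireg s 9 = int c" "ireg s 11 = int lo" "lo \<le> c" "ireg s 2 = 1"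
    "rreg s 11 = 0" "rreg s 6 = v" "rreg s 4 = mx" "rreg s 5 = mn"
  shows "reaches prog s 8 (\<lambda>s'. pc s' = 78 \<and> ireg s' 9 = int (Suc c) \<and>
     rreg s' 4 = (if c = lo then v else max mx v) \<and> rreg s' 5 = (if c = lo then v else min mn v) \<and>
     unchanged_except s s' {9} {4,5})"
  by (insert assms, rule reaches_stepI, simp, simp split del: if_split, (rule reaches_if_pc)?)
    ((rule reaches_at_pc, (simp; fail), (auto simp: unchanged_except_def add_ac)[1])
      | (rule reaches_stepI, simp, simp split del: if_split, (rule reaches_if_pc)?))+

lemma exec_feature_end:
  assumes "pc s = 121" "ireg s 8 = int f" "ireg s 2 = 1"
  shows "reaches prog s 4 (\<lambda>s'. pc s' = 67 \<and> ireg s' 8 = int (Suc f) \<and>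
     rreg s' 2 = rreg s 2 + rreg s 4 \<and> rreg s' 3 = rreg s 3 + rreg s 5 \<and>
     unchanged_except s s' {8} {2,3})"
  by (insert assms, rule reaches_stepI, simp, simp split del: if_split, (rule reaches_if_pc)?)
    ((rule reaches_at_pc, (simp; fail), (auto simp: unchanged_except_def add_ac)[1])
      | (rule reaches_stepI, simp, simp split del: if_split, (rule reaches_if_pc)?))+

lemma exec_gap_test:
  assumes "pc s = 125" "rreg s 2 = r1" "rreg s 3 = r2" "rreg s 0 = g" "rreg s 10 = 1"
    "rreg s 11 = 0" "rreg s 12 = 2"
  shows "reaches prog s 16 (\<lambda>s'. pc s' = (if gap_separated g r1 r2 then 141 else 142) \<and>
     (gap_separated g r1 r2 \<longrightarrow> ireg s' 0 = 1) \<and>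
     (\<not> gap_separated g r1 r2 \<longrightarrow> unchanged_except s s' {} {9,13,14}))"
  unfolding gap_separated_def sigmoid_def
  by (insert assms, rule reaches_stepI, simp, simp split del: if_split, (rule reaches_if_pc)?)
    ((rule reaches_at_pc, (simp; fail), (auto simp: unchanged_except_def add_ac)[1])
      | (rule reaches_stepI, simp, simp split del: if_split, (rule reaches_if_pc)?))+

lemma exec_counter_start:
  assumes "pc s = 142"
  shows "reaches prog s 1 (\<lambda>s'. pc s' = 143 \<and> ireg s' 8 = 0 \<and> unchanged_except s s' {8} {})"
  by (insert assms, rule reaches_stepI, simp, simp split del: if_split, (rule reaches_if_pc)?)
    ((rule reaches_at_pc, (simp; fail), (auto simp: unchanged_except_def add_ac)[1])
      | (rule reaches_stepI, simp, simp split del: if_split, (rule reaches_if_pc)?))+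

lemma exec_counter_overflow:
  assumes "pc s = 143" "ireg s 8 = int f" "ireg s 0 = int d" "d \<le> f"
  shows "reaches prog s 2 (\<lambda>s'. pc s' = 157 \<and> ireg s' 0 = 0)"
  by (insert assms, rule reaches_stepI, simp, simp split del: if_split, (rule reaches_if_pc)?)
    ((rule reaches_at_pc, (simp; fail), (auto simp: unchanged_except_def add_ac)[1])
      | (rule reaches_stepI, simp, simp split del: if_split, (rule reaches_if_pc)?))+

lemma exec_counter_skip:
  assumes "pc s = 143" "ireg s 8 = int f" "ireg s 0 = int d" "f < d" "ireg s 5 = int flb"
    "ireg s (flb + f) = 1" "ireg s 2 = 1" "flb \<ge> 17"
  shows "reaches prog s 6 (\<lambda>s'. pc s' = 143 \<and> ireg s' 8 = int (Suc f) \<and>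
     unchanged_except s s' {8,13,14} {})"
  by (insert assms, rule reaches_stepI, simp, simp split del: if_split, (rule reaches_if_pc)?)
    ((rule reaches_at_pc, (simp; fail), (auto simp: unchanged_except_def add_ac)[1])
      | (rule reaches_stepI, simp, simp split del: if_split, (rule reaches_if_pc)?))+

lemma exec_counter_carry:
  assumes "pc s = 143" "ireg s 8 = int f" "ireg s 0 = int d" "f < d" "ireg s 5 = int flb"
    "ireg s (flb + f) = 0" "ireg s 2 = 1" "flb \<ge> 17" "ireg s 6 = int yb" "yb \<ge> 17"
    "ireg s (yb + f) = int y" "ireg s 3 = int m" "m \<le> y" "ireg s 16 = 0"
  shows "reaches prog s 10 (\<lambda>s'. pc s' = 143 \<and> ireg s' 8 = int (Suc f) \<and> ireg s' (yb + f) = 0 \<and>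
     unchanged_except s s' {yb + f, 8,13,14} {})"
  by (insert assms, rule reaches_stepI, simp, simp split del: if_split, (rule reaches_if_pc)?)
    ((rule reaches_at_pc, (simp; fail), (auto simp: unchanged_except_def add_ac)[1])
      | (rule reaches_stepI, simp, simp split del: if_split, (rule reaches_if_pc)?))+

lemma exec_counter_increment:
  assumes "pc s = 143" "ireg s 8 = int f" "ireg s 0 = int d" "f < d" "ireg s 5 = int flb"
    "ireg s (flb + f) = 0" "ireg s 2 = 1" "flb \<ge> 17" "ireg s 6 = int yb" "yb \<ge> 17"
    "ireg s (yb + f) = int y" "ireg s 3 = int m" "y < m"
  shows "reaches prog s 10 (\<lambda>s'. pc s' = 64 \<and> ireg s' (yb + f) = int (Suc y) \<and>
     unchanged_except s s' {yb + f, 13,14} {})"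
  by (insert assms, rule reaches_stepI, simp, simp split del: if_split, (rule reaches_if_pc)?)
    ((rule reaches_at_pc, (simp; fail), (auto simp: unchanged_except_def add_ac)[1])
      | (rule reaches_stepI, simp, simp split del: if_split, (rule reaches_if_pc)?))+

lemma Max_Min_image_atLeastLessThan_Suc:
  assumes "lo \<le> c"
  shows "Max (h ` {lo..<Suc c}) = (if c = lo then h c else max (Max (h ` {lo..<c})) (h c))"
    and "Min (h ` {lo..<Suc c}) = (if c = lo then h c else min (Min (h ` {lo..<c})) (h c))"
proof -
  have e: "{lo..<Suc c} = insert c {lo..<c}" using assms by auto
  show "Max (h ` {lo..<Suc c}) = (if c = lo then h c else max (Max (h ` {lo..<c})) (h c))"
    using assms unfolding e by (auto simp: max.commute)
  show "Min (h ` {lo..<Suc c}) = (if c = lo then h c else min (Min (h ` {lo..<c})) (h c))"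
    using assms unfolding e by (auto simp: min.commute)
qed

lemma exec_stump_loop:
  assumes "mem_inv d E F g s Y" "pc s = 88" "ireg s 8 = int f" "ireg s 9 = int c"
    "ireg s 10 = int j" "ireg s 13 = int (feat_base d (length E) + j)"
    "ireg s 15 = int (stump_base (length E) + 3*j)" "j \<le> length E" "c \<le> length E"
    "c < length E \<Longrightarrow> rreg s 7 = thr E c"
  shows "reaches prog s ((length E - j) * 20 + 1) (\<lambda>s'. pc s' = 111 \<and>
     rreg s' 6 = rreg s 6 + (\<Sum>i\<in>{j..<length E}. if feat E i = f then stump_at E i c else 0) \<and>
     unchanged_except s s' {10,13,14,15} {6,8,9})"
  using assms
proof (induction "length E - j" arbitrary: s j)
  case 0
  then have "j = length E" "ireg s 3 = int (length E)" by (simp_all add: mem_inv_def const_regs_def)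
  with 0 show ?case
    by (auto simp: unchanged_except_def intro!: reaches_stepI[OF _ reaches_now])
next
  case (Suc n)
  let ?m = "length E"
  have j: "j < ?m" using Suc.hyps(2) by simp
  then have regs: "ireg s 3 = int ?m" "ireg s 2 = 1"
    "ireg s (feat_base d ?m + j) = int (feat E j)" "rreg s (stump_base ?m + 3*j) = thr E j"
    "rreg s (stump_base ?m + 3*j + 1) = yes_val E j" "rreg s (stump_base ?m + 3*j + 2) = no_val E j"
    using Suc.prems(1) unfolding mem_inv_def const_regs_def by auto
  have "17 \<le> feat_base d ?m" "17 \<le> stump_base ?m"
    by (simp_all add: feat_base_def stump_base_def)
  note step = exec_stump_step[OF Suc.prems(2) regs(1,2) Suc.prems(3-7) j Suc.prems(9) regs(3-6)
      refl refl this]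
  have contrib: "(if feat E j = f then if c < ?m then if rreg s 7 < thr E j then yes_val E j
      else no_val E j else yes_val E j else 0) = (if feat E j = f then stump_at E j c else 0)"
    using Suc.prems(10) j by (simp add: stump_at_eq)
  obtain s1 where r1: "steps_within prog 20 s s1" and s1: "pc s1 = 88"
    "ireg s1 10 = int (Suc j)" "ireg s1 13 = int (feat_base d ?m + Suc j)"
    "ireg s1 15 = int (stump_base ?m + 3 * Suc j)"
    and v1: "rreg s1 6 = rreg s 6 + (if feat E j = f then stump_at E j c else 0)"
    and u1: "unchanged_except s s1 {10,13,14,15} {6,8,9}"
    using step unfolding contrib reaches_def by blast
  have inv1: "mem_inv d E F g s1 Y" using mem_inv_unchanged[OF Suc.prems(1) u1] by simp
  have "ireg s1 8 = int f" "ireg s1 9 = int c" "c < ?m \<Longrightarrow> rreg s1 7 = thr E c"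
    using u1 Suc.prems unfolding unchanged_except_def by auto
  moreover have "n = ?m - Suc j" "Suc j \<le> ?m" using Suc.hyps(2) j by simp_all
  ultimately obtain s2 where r2: "steps_within prog ((?m - Suc j) * 20 + 1) s1 s2" and "pc s2 = 111"
    and v2: "rreg s2 6 = rreg s1 6 + (\<Sum>i\<in>{Suc j..<?m}. if feat E i = f then stump_at E i c else 0)"
    and u2: "unchanged_except s1 s2 {10,13,14,15} {6,8,9}"
    using Suc.hyps(1)[OF _ inv1 s1(1) _ _ s1(2-4) _ Suc.prems(9)] unfolding reaches_def by blast
  have "steps_within prog ((?m - j) * 20 + 1) s s2"
    using steps_within_trans[OF r1 r2] j by (simp add: Suc_diff_Suc)
  moreover have "rreg s2 6 = rreg s 6 + (\<Sum>i\<in>{j..<?m}. if feat E i = f then stump_at E i c else 0)"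
    using v1 v2 j by (simp add: sum.atLeast_Suc_lessThan)
  moreover have "unchanged_except s s2 {10,13,14,15} {6,8,9}"
    using unchanged_except_trans[OF u1 u2] by simp
  ultimately show ?case using \<open>pc s2 = 111\<close> unfolding reaches_def by blast
qed

lemma exec_cand_step:
  assumes "mem_inv d E F g s Y" "pc s = 78" "ireg s 8 = int f" "ireg s 9 = int c"
    "ireg s 11 = int lo" "ireg s 12 = int hi" "lo \<le> c" "c \<le> hi" "hi \<le> length E"
  shows "reaches prog s (20 * length E + 18) (\<lambda>s'. pc s' = 78 \<and> ireg s' 9 = int (Suc c) \<and>
     rreg s' 4 = (if c = lo then feature_val E f c else max (rreg s 4) (feature_val E f c)) \<and>
     rreg s' 5 = (if c = lo then feature_val E f c else min (rreg s 5) (feature_val E f c)) \<and>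
     unchanged_except s s' {9,10,13,14,15} {4,5,6,7,8,9})"
proof -
  let ?m = "length E"
  have regs: "ireg s 4 = int (feat_base d ?m)" "ireg s 7 = int (stump_base ?m)" "ireg s 16 = 0"
    "ireg s 2 = 1" "rreg s 11 = 0"
    using assms(1) unfolding mem_inv_def const_regs_def by auto
  have base: "17 \<le> stump_base ?m" by (simp add: stump_base_def)
  obtain s1 where r1: "steps_within prog 9 s s1" and s1: "pc s1 = 88" "ireg s1 10 = 0"
    "ireg s1 13 = int (feat_base d ?m)" "ireg s1 15 = int (stump_base ?m)" "rreg s1 6 = 0"
    "rreg s1 7 = rreg s (stump_base ?m + 3 * c)"
    and u1: "unchanged_except s s1 {10,13,15} {6,7}"
    using exec_cand_start[OF assms(2,4,6,8) regs(1-3) refl base] unfolding reaches_def by blast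
  have inv1: "mem_inv d E F g s1 Y" using mem_inv_unchanged[OF assms(1) u1] by simp
  have "ireg s1 8 = int f" "ireg s1 9 = int c" "c < ?m \<Longrightarrow> rreg s1 7 = thr E c"
    "ireg s1 10 = int 0" "ireg s1 13 = int (feat_base d ?m + 0)"
    "ireg s1 15 = int (stump_base ?m + 3 * 0)"
    using u1 assms s1 unfolding unchanged_except_def mem_inv_def const_regs_def by auto
  then obtain s2 where r2: "steps_within prog ((?m - 0) * 20 + 1) s1 s2" and "pc s2 = 111"
    and v2: "rreg s2 6 = feature_val E f c" and u2: "unchanged_except s1 s2 {10,13,14,15} {6,8,9}"
    using exec_stump_loop[OF inv1 s1(1), of f c 0] assms(8,9) s1(5)
    unfolding reaches_def feature_val_def by (auto simp: atLeast0LessThan)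
  have "ireg s2 9 = int c" "ireg s2 11 = int lo" "ireg s2 2 = 1" "rreg s2 11 = 0"
    "rreg s2 4 = rreg s 4" "rreg s2 5 = rreg s 5"
    using u1 u2 assms regs unfolding unchanged_except_def by auto
  from exec_cand_end[OF \<open>pc s2 = 111\<close> this(1,2) assms(7) this(3,4) v2 this(5,6)]
  obtain s3 where r3: "steps_within prog 8 s2 s3" and "pc s3 = 78" "ireg s3 9 = int (Suc c)"
    "rreg s3 4 = (if c = lo then feature_val E f c else max (rreg s 4) (feature_val E f c))"
    "rreg s3 5 = (if c = lo then feature_val E f c else min (rreg s 5) (feature_val E f c))"
    and u3: "unchanged_except s2 s3 {9} {4,5}"
    unfolding reaches_def by blast
  moreover have "steps_within prog (20 * ?m + 18) s s3"
    using steps_within_trans[OF steps_within_trans[OF r1 r2 order_refl] r3] by simp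
  moreover have "unchanged_except s s3 {9,10,13,14,15} {4,5,6,7,8,9}"
    using unchanged_except_trans[OF unchanged_except_trans[OF u1 u2 order_refl order_refl] u3]
    by auto
  ultimately show ?thesis unfolding reaches_def by blast
qed

lemma exec_cand_loop:
  assumes "mem_inv d E F g s Y" "pc s = 78" "ireg s 8 = int f" "ireg s 9 = int c"
    "ireg s 11 = int lo" "ireg s 12 = int hi" "lo \<le> c" "c \<le> Suc hi" "lo \<le> hi" "hi \<le> length E"
    "lo < c \<Longrightarrow>
      rreg s 4 = Max (feature_val E f ` {lo..<c}) \<and> rreg s 5 = Min (feature_val E f ` {lo..<c})"
  shows "reaches prog s ((Suc hi - c) * (20 * length E + 18) + 2) (\<lambda>s'. pc s' = 121 \<and>
     rreg s' 4 = Max (feature_val E f ` {lo..hi}) \<and> rreg s' 5 = Min (feature_val E f ` {lo..hi}) \<and>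
     unchanged_except s s' {9,10,13,14,15} {4,5,6,7,8,9})"
  using assms
proof (induction "Suc hi - c" arbitrary: s c)
  case 0
  then have "c = Suc hi" "{lo..hi} = {lo..<c}" by auto
  with 0 show ?case
    by (intro reaches_mono[OF exec_cand_exit[OF 0(3,5,7)]]) (auto simp: unchanged_except_def)
next
  case (Suc n)
  let ?K = "20 * length E + 18"
  have c: "c \<le> hi" using Suc.hyps(2) by simp
  obtain s1 where r1: "steps_within prog ?K s s1" and s1: "pc s1 = 78" "ireg s1 9 = int (Suc c)"
    "rreg s1 4 = (if c = lo then feature_val E f c else max (rreg s 4) (feature_val E f c))"
    "rreg s1 5 = (if c = lo then feature_val E f c else min (rreg s 5) (feature_val E f c))"
    and u1: "unchanged_except s s1 {9,10,13,14,15} {4,5,6,7,8,9}"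
    using exec_cand_step[OF Suc.prems(1-7) c Suc.prems(10)] unfolding reaches_def by blast
  have inv1: "mem_inv d E F g s1 Y" using mem_inv_unchanged[OF Suc.prems(1) u1] by simp
  have "ireg s1 8 = int f" "ireg s1 11 = int lo" "ireg s1 12 = int hi"
    using u1 Suc.prems unfolding unchanged_except_def by auto
  moreover have "rreg s1 4 = Max (feature_val E f ` {lo..<Suc c})"
    "rreg s1 5 = Min (feature_val E f ` {lo..<Suc c})"
    unfolding Max_Min_image_atLeastLessThan_Suc[OF Suc.prems(7)]
    using s1 Suc.prems(7,11) by (cases "c = lo"; simp)+
  moreover have "n = Suc hi - Suc c" using Suc.hyps(2) by simp
  ultimately obtain s2 where r2: "steps_within prog ((Suc hi - Suc c) * ?K + 2) s1 s2"
    and "pc s2 = 121" "rreg s2 4 = Max (feature_val E f ` {lo..hi})"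
    "rreg s2 5 = Min (feature_val E f ` {lo..hi})"
    and u2: "unchanged_except s1 s2 {9,10,13,14,15} {4,5,6,7,8,9}"
    using Suc.hyps(1)[OF _ inv1 s1(1) _ s1(2)] Suc.prems(7,9,10) c unfolding reaches_def by force
  moreover have "steps_within prog ((Suc hi - c) * ?K + 2) s s2"
    using steps_within_trans[OF r1 r2] c by (simp add: Suc_diff_le)
  moreover have "unchanged_except s s2 {9,10,13,14,15} {4,5,6,7,8,9}"
    using unchanged_except_trans[OF u1 u2] by simp
  ultimately show ?case unfolding reaches_def by blast
qed

definition feature_time :: "nat \<Rightarrow> nat" where
  "feature_time m = Suc m * (20 * m + 18) + 15"

lemma exec_feature_step:
  assumes "mem_inv d E F g s Y" "pc s = 67" "ireg s 8 = int f" "f < d" "f \<notin> F \<Longrightarrow> Y f \<le> length E"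
  shows "reaches prog s (feature_time (length E)) (\<lambda>s'. pc s' = 67 \<and> ireg s' 8 = int (Suc f) \<and>
     rreg s' 2 = rreg s 2 + Max (feature_val E f ` cand_range (length E) F Y f) \<and>
     rreg s' 3 = rreg s 3 + Min (feature_val E f ` cand_range (length E) F Y f) \<and>
     unchanged_except s s' {8,9,10,11,12,13,14,15} {2,3,4,5,6,7,8,9})"
proof -
  let ?m = "length E" and ?K = "20 * length E + 18"
  let ?lo = "if f \<in> F then 0 else Y f" and ?hi = "if f \<in> F then ?m else Y f"
  have regs: "ireg s 0 = int d" "ireg s 5 = int (flag_base d ?m)"
    "ireg s (flag_base d ?m + f) = (if f \<in> F then 1 else 0)" "ireg s 2 = 1"
    "ireg s 6 = int (choice_base d ?m)" "ireg s (choice_base d ?m + f) = int (Y f)"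
    "ireg s 3 = int ?m" "ireg s 16 = 0" "17 \<le> flag_base d ?m" "17 \<le> choice_base d ?m"
    using assms(1,4) unfolding mem_inv_def const_regs_def
    by (auto simp: flag_base_def choice_base_def)
  obtain s1 where r1: "steps_within prog 9 s s1" and s1: "pc s1 = 78" "ireg s1 9 = int ?lo"
    "ireg s1 11 = int ?lo" "ireg s1 12 = int ?hi"
    and u1: "unchanged_except s s1 {9,11,12,13,14} {}"
    using exec_feature_start[OF assms(2) regs(1) assms(3,4) regs(2-10)]
    unfolding reaches_def by blast
  have inv1: "mem_inv d E F g s1 Y" using mem_inv_unchanged[OF assms(1) u1] by simp
  have "ireg s1 8 = int f" using u1 assms(3) unfolding unchanged_except_def by simp
  moreover have lohi: "?lo \<le> Suc ?hi" "?lo \<le> ?hi" "?hi \<le> ?m" using assms(5) by auto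
  ultimately obtain s2 where r2: "steps_within prog ((Suc ?hi - ?lo) * ?K + 2) s1 s2"
    and "pc s2 = 121" "rreg s2 4 = Max (feature_val E f ` {?lo..?hi})"
    "rreg s2 5 = Min (feature_val E f ` {?lo..?hi})"
    and u2: "unchanged_except s1 s2 {9,10,13,14,15} {4,5,6,7,8,9}"
    using exec_cand_loop[OF inv1 s1(1) _ s1(2-4) order_refl] unfolding reaches_def by blast
  moreover have "{?lo..?hi} = cand_range ?m F Y f" by (simp add: cand_range_def)
  moreover have "ireg s2 8 = int f" "ireg s2 2 = 1" "rreg s2 2 = rreg s 2" "rreg s2 3 = rreg s 3"
    using u1 u2 assms(3) regs unfolding unchanged_except_def by auto
  ultimately obtain s3 where r3: "steps_within prog 4 s2 s3" and "pc s3 = 67"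
    "ireg s3 8 = int (Suc f)"
    "rreg s3 2 = rreg s 2 + Max (feature_val E f ` cand_range ?m F Y f)"
    "rreg s3 3 = rreg s 3 + Min (feature_val E f ` cand_range ?m F Y f)"
    and u3: "unchanged_except s2 s3 {8} {2,3}"
    using exec_feature_end[of s2 f] unfolding reaches_def by auto
  moreover have "(Suc ?hi - ?lo) * ?K \<le> Suc ?m * ?K"
    by (rule mult_le_mono1) (use lohi in simp)
  then have "steps_within prog (feature_time ?m) s s3"
    using steps_within_trans[OF steps_within_trans[OF r1 r2 order_refl] r3]
    unfolding feature_time_def by simp
  moreover have "unchanged_except s s3 {8,9,10,11,12,13,14,15} {2,3,4,5,6,7,8,9}"
    using unchanged_except_trans[OF unchanged_except_trans[OF u1 u2 order_refl order_refl] u3]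
    by auto
  ultimately show ?thesis unfolding reaches_def by blast
qed

lemma exec_feature_loop:
  assumes "mem_inv d E F g s Y" "pc s = 67" "ireg s 8 = int f" "f \<le> d"
    "\<forall>f'<d. f' \<notin> F \<longrightarrow> Y f' \<le> length E"
    "rreg s 2 = max_raw f E F Y" "rreg s 3 = min_raw f E F Y"
  shows "reaches prog s ((d - f) * feature_time (length E) + 1) (\<lambda>s'. pc s' = 125 \<and>
     rreg s' 2 = max_raw d E F Y \<and> rreg s' 3 = min_raw d E F Y \<and>
     unchanged_except s s' {8,9,10,11,12,13,14,15} {2,3,4,5,6,7,8,9})"
  using assms
proof (induction "d - f" arbitrary: s f)
  case 0
  then have "f = d" "ireg s 0 = int d" by (simp_all add: mem_inv_def const_regs_def)
  with 0 show ?case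
    by (intro reaches_mono[OF exec_feature_exit[OF 0(3)]]) (auto simp: unchanged_except_def)
next
  case (Suc n)
  let ?T = "feature_time (length E)"
  have f: "f < d" using Suc.hyps(2) by simp
  obtain s1 where r1: "steps_within prog ?T s s1" and s1: "pc s1 = 67" "ireg s1 8 = int (Suc f)"
    "rreg s1 2 = max_raw (Suc f) E F Y" "rreg s1 3 = min_raw (Suc f) E F Y"
    and u1: "unchanged_except s s1 {8,9,10,11,12,13,14,15} {2,3,4,5,6,7,8,9}"
    using exec_feature_step[OF Suc.prems(1-3) f] Suc.prems(5-7) f
    unfolding reaches_def max_raw_def min_raw_def by auto
  have inv1: "mem_inv d E F g s1 Y" using mem_inv_unchanged[OF Suc.prems(1) u1] by simp
  have "n = d - Suc f" "Suc f \<le> d" using Suc.hyps(2) by simp_all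
  then obtain s2 where r2: "steps_within prog ((d - Suc f) * ?T + 1) s1 s2"
    and "pc s2 = 125" "rreg s2 2 = max_raw d E F Y" "rreg s2 3 = min_raw d E F Y"
    and u2: "unchanged_except s1 s2 {8,9,10,11,12,13,14,15} {2,3,4,5,6,7,8,9}"
    using Suc.hyps(1)[OF _ inv1 s1(1,2) _ Suc.prems(5) s1(3,4)] unfolding reaches_def by blast
  moreover have "d - f = Suc (d - Suc f)" using f by simp
  then have "steps_within prog ((d - f) * ?T + 1) s s2"
    using steps_within_trans[OF r1 r2] by simp
  moreover have "unchanged_except s s2 {8,9,10,11,12,13,14,15} {2,3,4,5,6,7,8,9}"
    using unchanged_except_trans[OF u1 u2] by simp
  ultimately show ?case unfolding reaches_def by blast
qed

definition advanced_choice :: "nat \<Rightarrow> ensemble \<Rightarrow> nat set \<Rightarrow> real \<Rightarrow> (nat \<Rightarrow> nat) \<Rightarrow> state \<Rightarrow> bool" where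
  "advanced_choice d E F g Y s \<longleftrightarrow>
     (\<exists>Y'. pc s = 64 \<and> mem_inv d E F g s Y' \<and> valid_choice d (length E) F Y' \<and>
        choice_code (length E) F Y' d = Suc (choice_code (length E) F Y d)) \<or>
     (pc s = 157 \<and> ireg s 0 = 0 \<and> Suc (choice_code (length E) F Y d) = digit_weight (length E) F d)"

lemma exec_counter_digit:
  assumes "mem_inv d E F g s (clear_below f Y)" "valid_choice d (length E) F Y" "pc s = 143"
    "ireg s 8 = int f" "f < d" "\<forall>f'<f. f' \<notin> F \<longrightarrow> Y f' = length E"
  shows "reaches prog s 10 (\<lambda>s'. advanced_choice d E F g Y s' \<or>
     (pc s' = 143 \<and> ireg s' 8 = int (Suc f) \<and> mem_inv d E F g s' (clear_below (Suc f) Y) \<and>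
      (\<forall>f'<Suc f. f' \<notin> F \<longrightarrow> Y f' = length E)))"
proof -
  let ?m = "length E"
  have regs: "ireg s 0 = int d" "ireg s 5 = int (flag_base d ?m)"
    "ireg s (flag_base d ?m + f) = (if f \<in> F then 1 else 0)" "ireg s 2 = 1"
    "ireg s 6 = int (choice_base d ?m)" "ireg s (choice_base d ?m + f) = int (Y f)"
    "ireg s 3 = int ?m" "ireg s 16 = 0" "17 \<le> flag_base d ?m" "17 \<le> choice_base d ?m"
    using assms(1,5) unfolding mem_inv_def const_regs_def
    by (auto simp: flag_base_def choice_base_def clear_below_def)
  consider (skip) "f \<in> F" | (increment) "f \<notin> F" "Y f < ?m" | (carry) "f \<notin> F" "Y f = ?m"
    using assms(2,5) unfolding valid_choice_def by (metis (full_types) le_neq_implies_less)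
  then show ?thesis
  proof cases
    case skip
    then have "Y f = 0" using assms(2) unfolding valid_choice_def by (metis (full_types))
    then have clear: "clear_below (Suc f) Y = clear_below f Y"
      by (auto simp: clear_below_def less_Suc_eq)
    obtain s1 where r1: "steps_within prog 6 s s1" and "pc s1 = 143" "ireg s1 8 = int (Suc f)"
      and u1: "unchanged_except s s1 {8,13,14} {}"
      using exec_counter_skip[OF assms(3,4) regs(1) assms(5) regs(2) _ regs(4,9)] regs(3) skip
      unfolding reaches_def by auto
    moreover have "mem_inv d E F g s1 (clear_below (Suc f) Y)"
      using mem_inv_unchanged[OF assms(1) u1] clear by simp
    ultimately show ?thesis
      using assms(6) skip
      by (intro reaches_after[OF r1 reaches_now[where t = 0]]) (auto simp: less_Suc_eq)
  next
    case increment
    obtain s1 where r1: "steps_within prog 10 s s1" and "pc s1 = 64"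
      "ireg s1 (choice_base d ?m + f) = int (Suc (Y f))"
      and u1: "unchanged_except s s1 {choice_base d ?m + f, 13, 14} {}"
      using exec_counter_increment[OF assms(3,4) regs(1) assms(5) regs(2) _ regs(4,9,5,10,6,7)
          increment(2)] regs(3) increment(1)
      unfolding reaches_def by auto
    then have "mem_inv d E F g s1 ((clear_below f Y)(f := Suc (Y f)))"
      by (intro mem_inv_update_choice[OF assms(1) _ _ _ assms(5)]) auto
    then have "advanced_choice d E F g Y s1"
      using choice_increment[OF assms(2,5) increment assms(6)] \<open>pc s1 = 64\<close>
      unfolding advanced_choice_def by blast
    then show ?thesis by (intro reaches_after[OF r1 reaches_now[where t = 0]]) simp_all
  next
    case carry
    have clear: "clear_below (Suc f) Y = (clear_below f Y)(f := 0)"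
      by (auto simp: clear_below_def)
    obtain s1 where r1: "steps_within prog 10 s s1" and "pc s1 = 143" "ireg s1 8 = int (Suc f)"
      "ireg s1 (choice_base d ?m + f) = int 0"
      and u1: "unchanged_except s s1 {choice_base d ?m + f, 8, 13, 14} {}"
      using exec_counter_carry[OF assms(3,4) regs(1) assms(5) regs(2) _ regs(4,9,5,10,6,7) _ regs(8)]
        regs(3) carry
      unfolding reaches_def by auto
    moreover have "mem_inv d E F g s1 (clear_below (Suc f) Y)"
      unfolding clear using u1 calculation(4)
      by (intro mem_inv_update_choice[OF assms(1) _ _ _ assms(5)]) auto
    ultimately show ?thesis
      using assms(6) carry
      by (intro reaches_after[OF r1 reaches_now[where t = 0]]) (auto simp: less_Suc_eq)
  qed
qed

lemma exec_counter_loop: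
  assumes "mem_inv d E F g s (clear_below f Y)" "valid_choice d (length E) F Y" "pc s = 143"
    "ireg s 8 = int f" "f \<le> d" "\<forall>f'<f. f' \<notin> F \<longrightarrow> Y f' = length E"
  shows "reaches prog s ((d - f) * 10 + 2) (advanced_choice d E F g Y)"
  using assms
proof (induction "d - f" arbitrary: s f)
  case 0
  then have "f = d" "ireg s 0 = int d" by (simp_all add: mem_inv_def const_regs_def)
  moreover have "Suc (choice_code (length E) F Y d) = digit_weight (length E) F d"
    using Suc_choice_code_saturated[OF 0(3) order_refl] 0(7) \<open>f = d\<close> by simp
  ultimately show ?case using 0
    by (intro reaches_mono[OF exec_counter_overflow[OF 0(4,5)]]) (auto simp: advanced_choice_def)
next
  case (Suc n)
  have f: "f < d" and n: "n = d - Suc f" and time: "d - f = Suc (d - Suc f)"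
    using Suc.hyps(2) by simp_all
  obtain s1 where r1: "steps_within prog 10 s s1" and "advanced_choice d E F g Y s1 \<or>
      (pc s1 = 143 \<and> ireg s1 8 = int (Suc f) \<and> mem_inv d E F g s1 (clear_below (Suc f) Y) \<and>
       (\<forall>f'<Suc f. f' \<notin> F \<longrightarrow> Y f' = length E))"
    using exec_counter_digit[OF Suc.prems(1-4) f Suc.prems(6)] unfolding reaches_def by blast
  then consider (advanced) "advanced_choice d E F g Y s1"
    | (next_digit) "pc s1 = 143" "ireg s1 8 = int (Suc f)"
      "mem_inv d E F g s1 (clear_below (Suc f) Y)"
      "\<forall>f'<Suc f. f' \<notin> F \<longrightarrow> Y f' = length E"
    by blast
  then show ?case
  proof cases
    case advanced
    then show ?thesis by (intro reaches_after[OF r1 reaches_now[where t = 0]]) (simp_all add: time)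
  next
    case next_digit
    then have "reaches prog s1 ((d - Suc f) * 10 + 2) (advanced_choice d E F g Y)"
      using Suc.hyps(1)[OF n _ Suc.prems(2)] f by simp
    then show ?thesis by (rule reaches_after[OF r1]) (simp add: time)
  qed
qed

definition round_time :: "nat \<Rightarrow> nat \<Rightarrow> nat" where
  "round_time d m = d * feature_time m + 10 * d + 23"

lemma exec_choice_round:
  assumes "mem_inv d E F g s Y" "valid_choice d (length E) F Y" "pc s = 64"
  shows "reaches prog s (round_time d (length E)) (\<lambda>s'.
     if good_choice d E F g Y then halted prog s' \<and> ireg s' 0 = 1
     else advanced_choice d E F g Y s')"
proof -
  let ?m = "length E"
  obtain s1 where r1: "steps_within prog 3 s s1"
    and s1: "pc s1 = 67" "rreg s1 2 = 0" "rreg s1 3 = 0" "ireg s1 8 = 0"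
    and u1: "unchanged_except s s1 {8} {2,3}"
    using exec_choice_start[OF assms(3)] unfolding reaches_def by blast
  have inv1: "mem_inv d E F g s1 Y" using mem_inv_unchanged[OF assms(1) u1] by simp
  have "\<forall>f<d. f \<notin> F \<longrightarrow> Y f \<le> ?m"
    using assms(2) unfolding valid_choice_def by (metis (full_types))
  moreover have "rreg s1 2 = max_raw 0 E F Y" "rreg s1 3 = min_raw 0 E F Y"
    using s1 by (simp_all add: max_raw_def min_raw_def)
  ultimately obtain s2 where r2: "steps_within prog ((d - 0) * feature_time ?m + 1) s1 s2"
    and "pc s2 = 125" "rreg s2 2 = max_raw d E F Y" "rreg s2 3 = min_raw d E F Y"
    and u2: "unchanged_except s1 s2 {8,9,10,11,12,13,14,15} {2,3,4,5,6,7,8,9}"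
    using exec_feature_loop[OF inv1 s1(1), of 0] s1(4) unfolding reaches_def by auto
  have inv2: "mem_inv d E F g s2 Y" using mem_inv_unchanged[OF inv1 u2] by simp
  then have "rreg s2 0 = g" "rreg s2 10 = 1" "rreg s2 11 = 0" "rreg s2 12 = 2"
    unfolding mem_inv_def const_regs_def by simp_all
  from exec_gap_test[OF \<open>pc s2 = 125\<close> \<open>rreg s2 2 = max_raw d E F Y\<close>
      \<open>rreg s2 3 = min_raw d E F Y\<close> this]
  obtain s3 where r3: "steps_within prog 16 s2 s3"
    and s3: "pc s3 = (if good_choice d E F g Y then 141 else 142)"
    "good_choice d E F g Y \<Longrightarrow> ireg s3 0 = 1"
    "\<not> good_choice d E F g Y \<Longrightarrow> unchanged_except s2 s3 {} {9,13,14}"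
    unfolding reaches_def good_choice_def by auto
  have r13: "steps_within prog (d * feature_time ?m + 20) s s3"
    using steps_within_trans[OF steps_within_trans[OF r1 r2 order_refl] r3] by simp
  show ?thesis
  proof (cases "good_choice d E F g Y")
    case True
    then have "halted prog s3" "ireg s3 0 = 1" using s3 by (simp_all add: halted_def)
    then show ?thesis
      using True
      by (intro reaches_after[OF r13 reaches_now[where t = 0]]) (simp_all add: round_time_def)
  next
    case False
    then have "pc s3 = 142" and u3: "unchanged_except s2 s3 {} {9,13,14}" using s3 by simp_all
    obtain s4 where r4: "steps_within prog 1 s3 s4" and "pc s4 = 143" "ireg s4 8 = int 0"
      and u4: "unchanged_except s3 s4 {8} {}"
      using exec_counter_start[OF \<open>pc s3 = 142\<close>] unfolding reaches_def by auto
    have "mem_inv d E F g s4 (clear_below 0 Y)"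
      using mem_inv_unchanged[OF mem_inv_unchanged[OF inv2 u3] u4] by (simp add: clear_below_def)
    then have "reaches prog s4 ((d - 0) * 10 + 2) (advanced_choice d E F g Y)"
      by (rule exec_counter_loop[OF _ assms(2) \<open>pc s4 = 143\<close> \<open>ireg s4 8 = int 0\<close>]) simp_all
    then show ?thesis
      using False by (intro reaches_after[OF steps_within_trans[OF r13 r4 order_refl]])
        (auto simp: round_time_def elim: reaches_mono)
  qed
qed

lemma exec_enumeration:
  assumes "mem_inv d E F g s Y" "valid_choice d (length E) F Y" "pc s = 64"
    "\<And>Y'. valid_choice d (length E) F Y' \<Longrightarrow>
       choice_code (length E) F Y' d < choice_code (length E) F Y d \<Longrightarrow> \<not> good_choice d E F g Y'"
  shows "reaches prog s
     ((digit_weight (length E) F d - choice_code (length E) F Y d) * round_time d (length E))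
     (\<lambda>s'. halted prog s' \<and>
        ireg s' 0 =
          (if \<exists>Y'. valid_choice d (length E) F Y' \<and> good_choice d E F g Y' then 1 else 0))"
  using assms
proof (induction "digit_weight (length E) F d - choice_code (length E) F Y d"
    arbitrary: s Y rule: less_induct)
  case less
  let ?m = "length E" and ?R = "round_time d (length E)"
  let ?W = "digit_weight ?m F d" and ?code = "\<lambda>Y. choice_code ?m F Y d"
  have lt: "?code Y < ?W" using choice_code_less_weight[OF less.prems(2)] by simp
  then have "?W - ?code Y = Suc (?W - Suc (?code Y))" by simp
  then have time: "?R + (?W - Suc (?code Y)) * ?R \<le> (?W - ?code Y) * ?R" by simp
  note round = exec_choice_round[OF less.prems(1-3)]
  show ?case
  proof (cases "good_choice d E F g Y")
    case True
    then show ?thesis using less.prems(2) lt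
      by (intro reaches_mono[OF round]) auto
  next
    case False
    have no_good: "\<not> good_choice d E F g Y'" if "valid_choice d ?m F Y'" "?code Y' \<le> ?code Y" for Y'
      using less.prems(4) False choice_code_inj[OF that(1) less.prems(2)] that
      by (metis le_neq_implies_less)
    obtain s1 where r1: "steps_within prog ?R s s1" and "advanced_choice d E F g Y s1"
      using round False unfolding reaches_def by auto
    then consider (advanced) Y' where "pc s1 = 64" "mem_inv d E F g s1 Y'" "valid_choice d ?m F Y'"
        "?code Y' = Suc (?code Y)"
      | (overflow) "pc s1 = 157" "ireg s1 0 = 0" "Suc (?code Y) = ?W"
      unfolding advanced_choice_def by blast
    then show ?thesis
    proof cases
      case advanced
      have "?W - ?code Y' < ?W - ?code Y"
        using advanced(4) choice_code_less_weight[OF advanced(3) order_refl] by simp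
      then have "reaches prog s1 ((?W - ?code Y') * ?R) (\<lambda>s'. halted prog s' \<and>
          ireg s' 0 = (if \<exists>Y'. valid_choice d ?m F Y' \<and> good_choice d E F g Y' then 1 else 0))"
        using advanced no_good by (intro less.hyps) auto
      then show ?thesis using advanced(4) time by (intro reaches_after[OF r1]) simp_all
    next
      case overflow
      have "\<not> (\<exists>Y'. valid_choice d ?m F Y' \<and> good_choice d E F g Y')"
        using no_good choice_code_less_weight overflow(3) by (metis le_simps(2) order_refl)
      moreover have "halted prog s1" using overflow(1) by (simp add: halted_def)
      ultimately show ?thesis
        using overflow(2) lt by (intro reaches_after[OF r1 reaches_now[where t = 0]]) auto
    qed
  qed
qed

lemma exec_int_copy_loop:
  assumes "pc s = 12" "ireg s 0 = int d" "ireg s 1 = int q" "ireg s 3 = int r" "4 \<le> r"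
    "r + 2*d \<le> Suc q"
  shows "reaches prog s ((Suc q - 2*d - r) * 10 + 4) (\<lambda>s'. pc s' = 23 \<and>
     (\<forall>a. r \<le> a \<and> a + 2*d \<le> q \<longrightarrow> ireg s' (q + a) = ireg s a) \<and>
     unchanged_except s s' ({2,3} \<union> {q + r..2*q - 2*d}) {})"
  using assms
proof (induction "Suc q - 2*d - r" arbitrary: s r)
  case 0
  then have "q < r + 2*d" by simp
  with 0 show ?case
    by (intro reaches_mono[OF exec_int_copy_exit[OF 0(2,5,3,4)]]) (auto simp: unchanged_except_def)
next
  case (Suc n)
  have r: "r + 2*d \<le> q" using Suc.hyps(2) by simp
  obtain s1 where r1: "steps_within prog 10 s s1" and s1: "pc s1 = 12" "ireg s1 3 = int (Suc r)"
    "ireg s1 (q + r) = ireg s r" and u1: "unchanged_except s s1 {2,3,q+r} {}"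
    using exec_int_copy_step[OF Suc.prems(1,4,2,3) r Suc.prems(5)] unfolding reaches_def by blast
  have "ireg s1 0 = int d" "ireg s1 1 = int q" "n = Suc q - 2*d - Suc r"
    using u1 Suc.prems r Suc.hyps(2) unfolding unchanged_except_def by auto
  then obtain s2 where r2: "steps_within prog ((Suc q - 2*d - Suc r) * 10 + 4) s1 s2"
    and "pc s2 = 23" and copy2: "\<forall>a. Suc r \<le> a \<and> a + 2*d \<le> q \<longrightarrow> ireg s2 (q + a) = ireg s1 a"
    and u2: "unchanged_except s1 s2 ({2,3} \<union> {q + Suc r..2*q - 2*d}) {}"
    using Suc.hyps(1)[OF _ s1(1) _ _ s1(2)] Suc.prems(5) r unfolding reaches_def by force
  have "ireg s2 (q + a) = ireg s a" if "r \<le> a" "a + 2*d \<le> q" for a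
  proof (cases "a = r")
    case True
    then show ?thesis using u2 s1(3) Suc.prems(5) unfolding unchanged_except_def by simp
  next
    case False
    then show ?thesis using copy2 u1 that Suc.prems(5) unfolding unchanged_except_def by auto
  qed
  moreover have "steps_within prog ((Suc q - 2*d - r) * 10 + 4) s s2"
    using steps_within_trans[OF r1 r2] r by (simp add: Suc_diff_le)
  moreover have "unchanged_except s s2 ({2,3} \<union> {q + r..2*q - 2*d}) {}"
    by (rule unchanged_except_trans[OF u1 u2]) (use r in auto)
  ultimately show ?case using \<open>pc s2 = 23\<close> unfolding reaches_def by blast
qed

lemma exec_real_copy_loop:
  assumes "pc s = 54" "ireg s 2 = 1" "ireg s 8 = int a" "ireg s 9 = int T"
    "ireg s 10 = int L" "1 \<le> a" "a \<le> Suc L" "L < T" "2 \<le> T"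
  shows "reaches prog s ((Suc L - a) * 6 + 2) (\<lambda>s'. pc s' = 61 \<and>
     (\<forall>b. a \<le> b \<and> b \<le> L \<longrightarrow> rreg s' (b + T) = rreg s b) \<and>
     unchanged_except s s' {8,11} ({1} \<union> {a + T..L + T}))"
  using assms
proof (induction "Suc L - a" arbitrary: s a)
  case 0
  then have "L < a" by simp
  with 0 show ?case
    by (intro reaches_mono[OF exec_real_copy_exit[OF 0(2,4,6)]]) (auto simp: unchanged_except_def)
next
  case (Suc n)
  have a: "a \<le> L" using Suc.hyps(2) by simp
  obtain s1 where r1: "steps_within prog 6 s s1" and s1: "pc s1 = 54" "ireg s1 8 = int (Suc a)"
    "rreg s1 (a + T) = rreg s a" and u1: "unchanged_except s s1 {8,11} {1, a + T}"
    using exec_real_copy_step[OF Suc.prems(1,3-5) a Suc.prems(2,9)] unfolding reaches_def by blast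
  have "ireg s1 2 = 1" "ireg s1 9 = int T" "ireg s1 10 = int L" "n = Suc L - Suc a"
    using u1 Suc.prems Suc.hyps(2) unfolding unchanged_except_def by auto
  then obtain s2 where r2: "steps_within prog ((Suc L - Suc a) * 6 + 2) s1 s2"
    and "pc s2 = 61" and copy2: "\<forall>b. Suc a \<le> b \<and> b \<le> L \<longrightarrow> rreg s2 (b + T) = rreg s1 b"
    and u2: "unchanged_except s1 s2 {8,11} ({1} \<union> {Suc a + T..L + T})"
    using Suc.hyps(1)[OF _ s1(1) _ s1(2)] Suc.prems(7-9) a unfolding reaches_def by force
  have "rreg s2 (b + T) = rreg s b" if "a \<le> b" "b \<le> L" for b
  proof (cases "a = b")
    case True
    then show ?thesis using u2 s1(3) Suc.prems(9) unfolding unchanged_except_def by simp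
  next
    case False
    then show ?thesis using copy2 u1 that Suc.prems(6,8) unfolding unchanged_except_def by auto
  qed
  moreover have "steps_within prog ((Suc L - a) * 6 + 2) s s2"
    using steps_within_trans[OF r1 r2] a by (simp add: Suc_diff_le)
  moreover have "unchanged_except s s2 {8,11} ({1} \<union> {a + T..L + T})"
    by (rule unchanged_except_trans[OF u1 u2]) (use a in auto)
  ultimately show ?case using \<open>pc s2 = 61\<close> unfolding reaches_def by blast
qed

definition int_setup_time :: "nat \<Rightarrow> nat \<Rightarrow> nat" where
  "int_setup_time d m = (m + 2*d + 15) * 10 + 47"

text \<open>The integer input is moved up by \<open>m + 4d + 18\<close>, clear of the work registers; the
  registers 2 and 3 are parked first since the copy loop needs them.\<close>

lemma exec_int_relocation:
  assumes "1 \<le> d"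
  shows "reaches prog (encode d E F g) (int_setup_time d (length E)) (\<lambda>s'. pc s' = 54 \<and>
     const_regs d (length E) s' \<and> ireg s' 8 = 1 \<and> ireg s' 9 = int (3 * length E + 16) \<and>
     ireg s' 10 = int (3 * length E) \<and>
     (\<forall>a. 2 \<le> a \<and> a \<le> length E + d + 1 \<longrightarrow>
        ireg s' (length E + 4*d + 18 + a) = ireg (encode d E F g) a) \<and>
     unchanged_except (encode d E F g) s' {..<choice_base d (length E)} {})"
proof -
  let ?s0 = "encode d E F g" and ?m = "length E"
  let ?q = "?m + 4*d + 18"
  obtain s1 where r1: "steps_within prog 12 ?s0 s1" and s1: "pc s1 = 12" "ireg s1 0 = int d"
    "ireg s1 1 = int ?q" "ireg s1 3 = int 4" "ireg s1 (?m + 4*d) = ireg ?s0 2"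
    "ireg s1 (?m + 4*d + 21) = ireg ?s0 3"
    and u1: "unchanged_except ?s0 s1 {1, 2, 3, ?m + 4*d, ?m + 4*d + 21} {}"
    using exec_boot_prologue[OF encode_simps(1-3)[of d E F g] assms] unfolding reaches_def by auto
  obtain s2 where r2: "steps_within prog ((Suc ?q - 2*d - 4) * 10 + 4) s1 s2" and "pc s2 = 23"
    and copy: "\<forall>a. 4 \<le> a \<and> a + 2*d \<le> ?q \<longrightarrow> ireg s2 (?q + a) = ireg s1 a"
    and u2: "unchanged_except s1 s2 ({2,3} \<union> {?q + 4..2*?q - 2*d}) {}"
    using exec_int_copy_loop[OF s1(1-4)] unfolding reaches_def by auto
  have "ireg s2 0 = int d" "ireg s2 1 = int ?q" "ireg s2 (?m + 4*d) = ireg ?s0 2"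
    using u2 s1 assms unfolding unchanged_except_def by auto
  from exec_setup[OF \<open>pc s2 = 23\<close> this assms]
  obtain s3 where r3: "steps_within prog 31 s2 s3" and s3: "pc s3 = 54" "const_regs d ?m s3"
    "ireg s3 (?q + 2) = ireg ?s0 2" "ireg s3 8 = 1" "ireg s3 9 = int (3 * ?m + 16)"
    "ireg s3 10 = int (3 * ?m)"
    and u3: "unchanged_except s2 s3 {2,3,4,5,6,7,8,9,10,16, ?m + 4*d + 20} {}"
    unfolding reaches_def const_regs_def by (auto simp: add_ac)
  have "ireg s3 (?q + a) = ireg ?s0 a" if a: "2 \<le> a" "a \<le> ?m + d + 1" for a
  proof -
    consider (saved2) "a = 2" | (saved3) "a = 3" | (copied) "4 \<le> a" using a by linarith
    then show ?thesis
    proof cases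
      case saved2
      then show ?thesis using s3(3) by simp
    next
      case saved3
      then show ?thesis using u1 u2 u3 s1(6) unfolding unchanged_except_def by (auto simp: add_ac)
    next
      case copied
      then have "ireg s3 (?q + a) = ireg s1 a"
        using u3 copy a unfolding unchanged_except_def by auto
      also have "\<dots> = ireg ?s0 a" using u1 a copied assms unfolding unchanged_except_def by auto
      finally show ?thesis .
    qed
  qed
  moreover have "unchanged_except ?s0 s3 {..<choice_base d ?m} {}"
    by (rule unchanged_except_trans[OF unchanged_except_trans[OF u1 u2 order_refl order_refl] u3])
      (auto simp: choice_base_def)
  moreover have "steps_within prog (int_setup_time d ?m) ?s0 s3"
    using steps_within_trans[OF steps_within_trans[OF r1 r2 order_refl] r3]
    by (simp add: int_setup_time_def)
  ultimately show ?thesis using s3 unfolding reaches_def by (intro exI[of _ s3]) auto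
qed

lemma exec_int_setup:
  assumes "1 \<le> d"
  shows "reaches prog (encode d E F g) (int_setup_time d (length E)) (\<lambda>s'. pc s' = 54 \<and>
     const_regs d (length E) s' \<and> ireg s' 8 = 1 \<and> ireg s' 9 = int (3 * length E + 16) \<and>
     ireg s' 10 = int (3 * length E) \<and>
     (\<forall>j<length E. ireg s' (feat_base d (length E) + j) = int (feat E j)) \<and>
     (\<forall>f<d. ireg s' (flag_base d (length E) + f) = (if f \<in> F then 1 else 0)) \<and>
     (\<forall>f<d. ireg s' (choice_base d (length E) + f) = 0) \<and>
     (\<forall>b. rreg s' b = rreg (encode d E F g) b))"
proof -
  let ?s0 = "encode d E F g" and ?m = "length E"
  obtain s3 where r3: "steps_within prog (int_setup_time d ?m) ?s0 s3" and s3: "pc s3 = 54"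
    "const_regs d ?m s3" "ireg s3 8 = 1" "ireg s3 9 = int (3 * ?m + 16)" "ireg s3 10 = int (3 * ?m)"
    and reloc: "\<forall>a. 2 \<le> a \<and> a \<le> ?m + d + 1 \<longrightarrow> ireg s3 (?m + 4*d + 18 + a) = ireg ?s0 a"
    and u3: "unchanged_except ?s0 s3 {..<choice_base d ?m} {}"
    using exec_int_relocation[OF assms, of E F g] unfolding reaches_def by blast
  have "ireg s3 (feat_base d ?m + j) = int (feat E j)" if "j < ?m" for j
    using reloc[rule_format, of "2 + j"] ireg_encode_feat[OF that] that
    by (simp add: feat_base_def add_ac)
  moreover have "ireg s3 (flag_base d ?m + f) = (if f \<in> F then 1 else 0)" if "f < d" for f
    using reloc[rule_format, of "2 + ?m + f"] ireg_encode_flag[OF that] that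
    by (simp add: flag_base_def add_ac)
  moreover have "ireg s3 (choice_base d ?m + f) = 0" for f
    using u3 ireg_encode_beyond[of E d "choice_base d ?m + f"]
    unfolding unchanged_except_def by (simp add: choice_base_def)
  moreover have "rreg s3 b = rreg ?s0 b" for b
    using u3 unfolding unchanged_except_def by simp
  ultimately show ?thesis using r3 s3 unfolding reaches_def by blast
qed

definition boot_time :: "nat \<Rightarrow> nat \<Rightarrow> nat" where
  "boot_time d m = int_setup_time d m + 18 * m + 5"

lemma exec_boot:
  assumes "1 \<le> d"
  shows "reaches prog (encode d E F g) (boot_time d (length E))
     (\<lambda>s'. pc s' = 64 \<and> mem_inv d E F g s' (\<lambda>_. 0))"
proof -
  let ?s0 = "encode d E F g" and ?m = "length E"
  let ?T = "3 * ?m + 16"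
  obtain s3 where r3: "steps_within prog (int_setup_time d ?m) ?s0 s3" and s3: "pc s3 = 54"
    "const_regs d ?m s3" "ireg s3 8 = int 1" "ireg s3 9 = int ?T" "ireg s3 10 = int (3 * ?m)"
    "\<forall>j<?m. ireg s3 (feat_base d ?m + j) = int (feat E j)"
    "\<forall>f<d. ireg s3 (flag_base d ?m + f) = (if f \<in> F then 1 else 0)"
    "\<forall>f<d. ireg s3 (choice_base d ?m + f) = 0" "\<forall>b. rreg s3 b = rreg ?s0 b"
    using exec_int_setup[OF assms, of E F g] unfolding reaches_def by auto
  have "ireg s3 2 = 1" using s3(2) unfolding const_regs_def by simp
  obtain s4 where r4: "steps_within prog ((Suc (3 * ?m) - 1) * 6 + 2) s3 s4" and "pc s4 = 61"
    and copy: "\<forall>b. 1 \<le> b \<and> b \<le> 3 * ?m \<longrightarrow> rreg s4 (b + ?T) = rreg s3 b"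
    and u4: "unchanged_except s3 s4 {8,11} ({1} \<union> {1 + ?T..3 * ?m + ?T})"
    using exec_real_copy_loop[OF s3(1) \<open>ireg s3 2 = 1\<close> s3(3-5)] unfolding reaches_def by auto
  obtain s5 where r5: "steps_within prog 3 s4 s5" and s5: "pc s5 = 64" "rreg s5 10 = 1"
    "rreg s5 11 = 0" "rreg s5 12 = 2" and u5: "unchanged_except s4 s5 {} {10,11,12}"
    using exec_real_constants[OF \<open>pc s4 = 61\<close>] unfolding reaches_def by blast
  have copied: "rreg s5 (stump_base ?m + b - 1) = rreg ?s0 b" if "1 \<le> b" "b \<le> 3 * ?m" for b
  proof -
    have "rreg s5 (stump_base ?m + b - 1) = rreg s4 (b + ?T)"
      using u5 that unfolding unchanged_except_def by (auto simp: stump_base_def add_ac)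
    then show ?thesis using copy s3(9) that by simp
  qed
  have "rreg s5 (stump_base ?m + 3*j) = thr E j" "rreg s5 (stump_base ?m + 3*j + 1) = yes_val E j"
    "rreg s5 (stump_base ?m + 3*j + 2) = no_val E j" if "j < ?m" for j
    using copied[of "1 + 3*j"] copied[of "2 + 3*j"] copied[of "3 + 3*j"]
      rreg_encode_stump[OF that] that
    by (simp_all add: add_ac)
  moreover have "ireg s5 a = ireg s3 a" if "a \<notin> {8,11}" for a
    using u4 u5 that unfolding unchanged_except_def by auto
  moreover have "rreg s5 0 = g"
    using u4 u5 s3(9) encode_simps(4) unfolding unchanged_except_def by auto
  ultimately have "mem_inv d E F g s5 (\<lambda>_. 0)"
    using s3 s5 unfolding mem_inv_def const_regs_def
    by (simp add: feat_base_def flag_base_def choice_base_def stump_base_def)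
  moreover have "steps_within prog (boot_time d ?m) ?s0 s5"
    using steps_within_trans[OF steps_within_trans[OF r3 r4 order_refl] r5]
    by (simp add: boot_time_def)
  ultimately show ?thesis using s5(1) unfolding reaches_def by blast
qed

section \<open>Correctness and running time\<close>

lemma prog_decides_sensitive:
  assumes "stump_ensemble d E"
  shows "decides_within prog (encode d E F g)
    (boot_time d (length E) + digit_weight (length E) F d * round_time d (length E))
    (sensitive d E F g)"
proof (cases "d = 0")
  case True
  then have "E = []" using assms stump_ensemble_0 by simp
  with True have "reaches prog (encode d E F g) 8 (\<lambda>s'. pc s' = (if g \<le> 0 then 163 else 161) \<and>
      ireg s' 0 = (if g \<le> 0 then 1 else 0))"
    by (intro exec_empty_input) (simp_all add: encode_def)
  then show ?thesis unfolding decides_within_iff_reaches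
    by (rule reaches_mono)
      (use \<open>E = []\<close> in \<open>auto simp: boot_time_def int_setup_time_def halted_def sensitive_Nil\<close>)
next
  case False
  let ?m = "length E"
  obtain s1 where r1: "steps_within prog (boot_time d ?m) (encode d E F g) s1"
    and "pc s1 = 64" "mem_inv d E F g s1 (\<lambda>_. 0)"
    using exec_boot[of d E F g] False unfolding reaches_def by auto
  then have "reaches prog s1 ((digit_weight ?m F d - choice_code ?m F (\<lambda>_. 0) d) * round_time d ?m)
      (\<lambda>s'. halted prog s' \<and>
        ireg s' 0 = (if \<exists>Y. valid_choice d ?m F Y \<and> good_choice d E F g Y then 1 else 0))"
    by (intro exec_enumeration) (simp_all add: valid_choice_def choice_code_def)
  then show ?thesis
    unfolding decides_within_iff_reaches sensitive_iff_good_choice[OF assms]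
    by (rule reaches_after[OF r1]) (simp add: choice_code_def)
qed

lemma running_time_bound:
  assumes "card ({..<d} - F) \<le> k"
  shows "boot_time d m + digit_weight m F d * round_time d m \<le> 300 * (d + m + 1) ^ (k + 3)"
proof -
  let ?N = "d + m + 1"
  have N: "1 \<le> ?N" "1 \<le> ?N ^ 2" "1 \<le> ?N ^ 3" "?N \<le> ?N ^ 3" "?N \<le> ?N ^ (k + 3)"
    by (simp_all add: self_le_power)
  have "digit_weight m F d = Suc m ^ card ({..<d} - F)" by (rule digit_weight_eq_power)
  also have "\<dots> \<le> ?N ^ card ({..<d} - F)" by (rule power_mono) auto
  also have "\<dots> \<le> ?N ^ k" using assms N(1) by (rule power_increasing)
  finally have weight: "digit_weight m F d \<le> ?N ^ k" .
  have "Suc m * (20 * m + 18) \<le> ?N * (20 * ?N)" by (rule mult_le_mono) auto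
  also have "\<dots> = 20 * ?N ^ 2" by (simp only: power2_eq_square mult.assoc mult.left_commute)
  finally have "feature_time m \<le> 35 * ?N ^ 2"
    unfolding feature_time_def using N(2) by linarith
  then have "d * feature_time m \<le> ?N * (35 * ?N ^ 2)" by (intro mult_le_mono) auto
  then have round: "round_time d m \<le> 68 * ?N ^ 3"
    unfolding round_time_def power3_eq_cube power2_eq_square using N(3,4)
    by (simp add: algebra_simps)
  have "boot_time d m \<le> 202 * ?N"
    unfolding boot_time_def int_setup_time_def by simp
  also have "\<dots> \<le> 202 * ?N ^ (k + 3)" using N(5) by simp
  finally have boot: "boot_time d m \<le> 202 * ?N ^ (k + 3)" .
  have "digit_weight m F d * round_time d m \<le> ?N ^ k * (68 * ?N ^ 3)"
    by (rule mult_le_mono[OF weight round])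
  with boot show ?thesis by (simp add: power_add)
qed

theorem theorem2:
  fixes k :: nat
  shows "\<exists>(P :: program) (c :: nat) (e :: nat).
           \<forall>(d :: nat) (E :: ensemble) (F :: nat set) (g :: real).
             stump_ensemble d E \<and> F \<subseteq> {..<d} \<and> card ({..<d} - F) \<le> k \<and> g \<ge> 0
             \<longrightarrow> decides_within P (encode d E F g) (c * (d + length E + 1) ^ e)
                   (sensitive d E F g)"
proof (intro exI allI impI)
  fix d E F and g :: real
  assume "stump_ensemble d E \<and> F \<subseteq> {..<d} \<and> card ({..<d} - F) \<le> k \<and> g \<ge> 0"
  then show "decides_within prog (encode d E F g) (300 * (d + length E + 1) ^ (k + 3))
      (sensitive d E F g)"
    using prog_decides_sensitive running_time_bound decides_within_mono by blast
qed

end
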